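(* Let $0<\delta_1,\delta_2<1$. Every rate pair $(R_1,R_2)$ in the secret message capacity region $\mathcal{R}$ satisfies \[ \frac{R_1(1-\delta_2)}{\delta_2(1-\delta_1)(1-\delta_1\delta_2)}+\frac{R_1}{1-\delta_1}+\frac{R_2}{1-\delta_1\delta_2}\le L\log_2 q \quad\text{and}\quad \frac{R_2(1-\delta_1)}{\delta_1(1-\delta_2)(1-\delta_1\delta_2)}+\frac{R_1}{1-\delta_1\delta_2}+\frac{R_2}{1-\delta_2}\le L\log_2 q. \] Moreover, the same two inequalities hold if, in the definition of achievability, "secure against a malicious user" is replaced by the weaker requirement "secure against honest-but-curious users".
   Context: Channel model. A sender Alice transmits, at times $i=1,\dots,n$, packets $X_i\in\mathbb{F}_q^L$. Receiver Bob observes $Y_{1,i}$ and receiver Calvin observes $Y_{2,i}$, each in $\mathbb{F}_q^L\cup\{\perp\}$ ($\perp$ = erasure). The channel state $S_i\in\{B,C,BC,\emptyset\}$ records who received packet $i$; $S_1,S_2,\dots$ are i.i.d., independent of everything else, with Bob receiving with probability $1-\delta_1$ and Calvin with probability $1-\delta_2$, independently. $Y_{1,i}=X_i$ if Bob receives packet $i$, else $\perp$; similarly $Y_{2,i}$. After each transmission each receiver publicly, reliably and authentically acknowledges whether he received it (learning the other's acknowledgment for packet $i$ only after making his own); $S^\ast_i$ is the state as reported ($S^\ast_i=S_i$ under honest reporting). $V^i=(V_1,\dots,V_i)$. Alice, Bob, Calvin have independent private randomness $\Theta_A,\Theta_B,\Theta_C$. Logarithms base 2. Scheme. An $(n,\epsilon,N_1,N_2)$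 scheme: message sets $\mathbb{F}_q^{LN_1}$, $\mathbb{F}_q^{LN_2}$, encoders $X_i=f_i(W_1,W_2,\Theta_A,S^{\ast\,i-1})$, decoders $\hat W_1=\phi_1(Y_1^n)$, $\hat W_2=\phi_2(Y_2^n)$ with $\Pr\{\hat W_1\ne W_1\}<\epsilon$, $\Pr\{\hat W_2\ne W_2\}<\epsilon$ for arbitrary messages under honest acknowledgments. Secure against honest-but-curious users: additionally, when both are honest and $W_1,W_2$ independent uniform, $I(W_1;Y_2^nS^n\Theta_C)<\epsilon$ and $I(W_2;Y_1^nS^n\Theta_B)<\epsilon$. Secure against a malicious user: if Calvin is malicious (chooses the distribution of $W_1$ arbitrarily, with $W_2$ uniform, independent and not accessible to him, and sends arbitrary possibly randomized acknowledgments based on all information available to him at that time), then the reliability and secrecy conditions for $W_1$ still hold for honest Bob; symmetrically for malicious Bob. $(R_1,R_2)\in\mathbb{R}_+^2$ is achievable if for every $\epsilon,\epsilon'>0$ there exist $N_1,N_2,n$ and an $(n,\epsilon,N_1,N_2)$ scheme secure against a malicious user with $R_j-\epsilon'<\frac1nN_jL\log q$ for $j=1,2$. $\mathcal{R}$ is the set of achievable pairs. *)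

theory Defs
  imports "HOL-Probability.Probability" "HOL-Number_Theory.Prime_Powers"
begin

text \<open>
  Packets in F_q^L are encoded as natural numbers in {..<q^L}; messages in
  F_q^(L N_j) as natural numbers in {..<q^(L N_j)}.  (Encoders and decoders are
  arbitrary functions, so only the cardinalities of these sets matter.)
  An erasure is None, a received packet x is Some x.
  A channel state is a pair (b, c): b = Bob received, c = Calvin received.
  Private randomness Theta_A, Theta_B, Theta_C takes values in nat.
\<close>

type_synonym state = "bool \<times> bool"
type_synonym obs = "nat option"

text \<open>Record of one time slot: (true state S_i, reported state S*_i, packet X_i).\<close>
type_synonym slot = "state \<times> state \<times> nat"

text \<open>Encoder: time index i (0-based), W1, W2, Theta_A, reported states S*^(i-1).\<close>
type_synonym encoder = "nat \<Rightarrow> nat \<Rightarrow> nat \<Rightarrow> nat \<Rightarrow> state list \<Rightarrow> nat"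

text \<open>Acknowledgment strategy of a receiver: own private randomness, own
  observations Y^i up to and including the current slot, previously reported
  states S*^(i-1); returns a (possibly randomized) acknowledgment.\<close>
type_synonym ackstrat = "nat \<Rightarrow> obs list \<Rightarrow> state list \<Rightarrow> bool pmf"

definition honest_ack :: ackstrat where
  "honest_ack th ys ss = return_pmf (last ys \<noteq> None)"

definition obs1 :: "slot \<Rightarrow> obs" where
  "obs1 r = (if fst (fst r) then Some (snd (snd r)) else None)"
definition obs2 :: "slot \<Rightarrow> obs" where
  "obs2 r = (if snd (fst r) then Some (snd (snd r)) else None)"
definition true_state :: "slot \<Rightarrow> state" where
  "true_state r = fst r"
definition rep_state :: "slot \<Rightarrow> state" where
  "rep_state r = fst (snd r)"

definition step ::
  "real \<Rightarrow> real \<Rightarrow> encoder \<Rightarrow> nat \<Rightarrow> nat \<Rightarrow> nat \<Rightarrow> nat \<Rightarrow> nat \<Rightarrow>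
   ackstrat \<Rightarrow> ackstrat \<Rightarrow> nat \<Rightarrow> slot list \<Rightarrow> slot list pmf" where
  "step d1 d2 f w1 w2 tA tB tC aB aC i h =
     do { let x = f i w1 w2 tA (map rep_state h);
          b \<leftarrow> bernoulli_pmf (1 - d1);
          c \<leftarrow> bernoulli_pmf (1 - d2);
          let y1 = map obs1 h @ [if b then Some x else None];
          let y2 = map obs2 h @ [if c then Some x else None];
          b' \<leftarrow> aB tB y1 (map rep_state h);
          c' \<leftarrow> aC tC y2 (map rep_state h);
          return_pmf (h @ [((b, c), (b', c'), x)]) }"

fun run ::
  "real \<Rightarrow> real \<Rightarrow> encoder \<Rightarrow> nat \<Rightarrow> nat \<Rightarrow> nat \<Rightarrow> nat \<Rightarrow> nat \<Rightarrow>
   ackstrat \<Rightarrow> ackstrat \<Rightarrow> nat \<Rightarrow> slot list pmf" where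
  "run d1 d2 f w1 w2 tA tB tC aB aC 0 = return_pmf []"
| "run d1 d2 f w1 w2 tA tB tC aB aC (Suc i) =
     run d1 d2 f w1 w2 tA tB tC aB aC i \<bind> step d1 d2 f w1 w2 tA tB tC aB aC i"

type_synonym outcome = "nat \<times> nat \<times> nat \<times> nat \<times> nat \<times> slot list"

definition channel_exp ::
  "real \<Rightarrow> real \<Rightarrow> nat \<Rightarrow> encoder \<Rightarrow> nat pmf \<Rightarrow> nat pmf \<Rightarrow> nat pmf \<Rightarrow>
   nat pmf \<Rightarrow> nat pmf \<Rightarrow> ackstrat \<Rightarrow> ackstrat \<Rightarrow> outcome pmf" where
  "channel_exp d1 d2 n f PA PB PC PW1 PW2 aB aC =
     do { w1 \<leftarrow> PW1; w2 \<leftarrow> PW2; tA \<leftarrow> PA; tB \<leftarrow> PB; tC \<leftarrow> PC;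
          h \<leftarrow> run d1 d2 f w1 w2 tA tB tC aB aC n;
          return_pmf (w1, w2, tA, tB, tC, h) }"

definition W1_of :: "outcome \<Rightarrow> nat" where "W1_of \<omega> = fst \<omega>"
definition W2_of :: "outcome \<Rightarrow> nat" where "W2_of \<omega> = fst (snd \<omega>)"
definition thB_of :: "outcome \<Rightarrow> nat" where "thB_of \<omega> = fst (snd (snd (snd \<omega>)))"
definition thC_of :: "outcome \<Rightarrow> nat" where "thC_of \<omega> = fst (snd (snd (snd (snd \<omega>))))"
definition hist_of :: "outcome \<Rightarrow> slot list" where "hist_of \<omega> = snd (snd (snd (snd (snd \<omega>))))"
definition Y1_of :: "outcome \<Rightarrow> obs list" where "Y1_of \<omega> = map obs1 (hist_of \<omega>)"
definition Y2_of :: "outcome \<Rightarrow> obs list" where "Y2_of \<omega> = map obs2 (hist_of \<omega>)"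
definition S_of :: "outcome \<Rightarrow> state list" where "S_of \<omega> = map true_state (hist_of \<omega>)"
definition Sstar_of :: "outcome \<Rightarrow> state list" where "Sstar_of \<omega> = map rep_state (hist_of \<omega>)"

definition MI :: "'a pmf \<Rightarrow> ('a \<Rightarrow> 'b) \<Rightarrow> ('a \<Rightarrow> 'c) \<Rightarrow> real" where
  "MI P X Y = prob_space.mutual_information (measure_pmf P) 2 (count_space UNIV) (count_space UNIV) X Y"

definition msgs :: "nat \<Rightarrow> nat \<Rightarrow> nat \<Rightarrow> nat set" where
  "msgs q L N = {..< q ^ (L * N)}"

text \<open>An (n, eps, N1, N2) scheme (reliability under honest acknowledgments).
  PA, PB, PC are the distributions of Theta_A, Theta_B, Theta_C.\<close>
definition is_scheme ::
  "nat \<Rightarrow> nat \<Rightarrow> real \<Rightarrow> real \<Rightarrow> nat \<Rightarrow> real \<Rightarrow> nat \<Rightarrow> nat \<Rightarrow>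
   encoder \<Rightarrow> (obs list \<Rightarrow> nat) \<Rightarrow> (obs list \<Rightarrow> nat) \<Rightarrow> nat pmf \<Rightarrow> nat pmf \<Rightarrow> nat pmf \<Rightarrow> bool" where
  "is_scheme q L d1 d2 n eps N1 N2 f phi1 phi2 PA PB PC \<longleftrightarrow>
     (\<forall>i w1 w2 t s. f i w1 w2 t s < q ^ L) \<and>
     (\<forall>w1\<in>msgs q L N1. \<forall>w2\<in>msgs q L N2.
        let P = channel_exp d1 d2 n f PA PB PC (return_pmf w1) (return_pmf w2) honest_ack honest_ack
        in measure_pmf.prob P {\<omega>. phi1 (Y1_of \<omega>) \<noteq> W1_of \<omega>} < eps \<and>
           measure_pmf.prob P {\<omega>. phi2 (Y2_of \<omega>) \<noteq> W2_of \<omega>} < eps)"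

definition secure_hbc ::
  "nat \<Rightarrow> nat \<Rightarrow> real \<Rightarrow> real \<Rightarrow> nat \<Rightarrow> real \<Rightarrow> nat \<Rightarrow> nat \<Rightarrow>
   encoder \<Rightarrow> (obs list \<Rightarrow> nat) \<Rightarrow> (obs list \<Rightarrow> nat) \<Rightarrow> nat pmf \<Rightarrow> nat pmf \<Rightarrow> nat pmf \<Rightarrow> bool" where
  "secure_hbc q L d1 d2 n eps N1 N2 f phi1 phi2 PA PB PC \<longleftrightarrow>
     is_scheme q L d1 d2 n eps N1 N2 f phi1 phi2 PA PB PC \<and>
     (let P = channel_exp d1 d2 n f PA PB PC (pmf_of_set (msgs q L N1)) (pmf_of_set (msgs q L N2))
                honest_ack honest_ack
      in MI P W1_of (\<lambda>\<omega>. (Y2_of \<omega>, S_of \<omega>, thC_of \<omega>)) < eps \<and>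
         MI P W2_of (\<lambda>\<omega>. (Y1_of \<omega>, S_of \<omega>, thB_of \<omega>)) < eps)"

text \<open>Secure against a malicious user: for every malicious Calvin (choosing the
  distribution PW1 of W1 supported on the message set, and an arbitrary randomized
  acknowledgment strategy aC), with W2 uniform, reliability and secrecy of W1 hold
  for honest Bob; and symmetrically for a malicious Bob.\<close>
definition secure_mal ::
  "nat \<Rightarrow> nat \<Rightarrow> real \<Rightarrow> real \<Rightarrow> nat \<Rightarrow> real \<Rightarrow> nat \<Rightarrow> nat \<Rightarrow>
   encoder \<Rightarrow> (obs list \<Rightarrow> nat) \<Rightarrow> (obs list \<Rightarrow> nat) \<Rightarrow> nat pmf \<Rightarrow> nat pmf \<Rightarrow> nat pmf \<Rightarrow> bool" where
  "secure_mal q L d1 d2 n eps N1 N2 f phi1 phi2 PA PB PC \<longleftrightarrow>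
     is_scheme q L d1 d2 n eps N1 N2 f phi1 phi2 PA PB PC \<and>
     (\<forall>PW1 aC. set_pmf PW1 \<subseteq> msgs q L N1 \<longrightarrow>
        (let P = channel_exp d1 d2 n f PA PB PC PW1 (pmf_of_set (msgs q L N2)) honest_ack aC
         in measure_pmf.prob P {\<omega>. phi1 (Y1_of \<omega>) \<noteq> W1_of \<omega>} < eps \<and>
            MI P W1_of (\<lambda>\<omega>. (Y2_of \<omega>, Sstar_of \<omega>, thC_of \<omega>)) < eps)) \<and>
     (\<forall>PW2 aB. set_pmf PW2 \<subseteq> msgs q L N2 \<longrightarrow>
        (let P = channel_exp d1 d2 n f PA PB PC (pmf_of_set (msgs q L N1)) PW2 aB honest_ack
         in measure_pmf.prob P {\<omega>. phi2 (Y2_of \<omega>) \<noteq> W2_of \<omega>} < eps \<and>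
            MI P W2_of (\<lambda>\<omega>. (Y1_of \<omega>, Sstar_of \<omega>, thB_of \<omega>)) < eps))"

definition achievable ::
  "(nat \<Rightarrow> nat \<Rightarrow> real \<Rightarrow> real \<Rightarrow> nat \<Rightarrow> real \<Rightarrow> nat \<Rightarrow> nat \<Rightarrow>
    encoder \<Rightarrow> (obs list \<Rightarrow> nat) \<Rightarrow> (obs list \<Rightarrow> nat) \<Rightarrow> nat pmf \<Rightarrow> nat pmf \<Rightarrow> nat pmf \<Rightarrow> bool) \<Rightarrow>
   nat \<Rightarrow> nat \<Rightarrow> real \<Rightarrow> real \<Rightarrow> real \<times> real \<Rightarrow> bool" where
  "achievable sec q L d1 d2 R \<longleftrightarrow>
     0 \<le> fst R \<and> 0 \<le> snd R \<and>
     (\<forall>eps>0. \<forall>eps'>0. \<exists>N1 N2 n f phi1 phi2 PA PB PC.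
        n > 0 \<and> sec q L d1 d2 n eps N1 N2 f phi1 phi2 PA PB PC \<and>
        fst R - eps' < real N1 * real L * log 2 (real q) / real n \<and>
        snd R - eps' < real N2 * real L * log 2 (real q) / real n)"

definition cap_region :: "nat \<Rightarrow> nat \<Rightarrow> real \<Rightarrow> real \<Rightarrow> (real \<times> real) set" where
  "cap_region q L d1 d2 = {R. achievable secure_mal q L d1 d2 R}"

definition cap_region_hbc :: "nat \<Rightarrow> nat \<Rightarrow> real \<Rightarrow> real \<Rightarrow> (real \<times> real) set" where
  "cap_region_hbc q L d1 d2 = {R. achievable secure_hbc q L d1 d2 R}"

end

theory Submission
  imports Defs "HOL-Real_Asymp.Real_Asymp"
begin

text \<open>
  Since security against a malicious user implies security against
  honest-but-curious users, it suffices to bound the honest-but-curious region.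
  Fix such a scheme and let \<open>Q\<close> be the joint law of the two uniform messages and
  the run under honest acknowledgments.  For a function \<open>U\<close> of the messages and a
  listener \<open>c\<close> (Bob, Calvin, or someone), the entropy of \<open>U\<close>, the observations of
  \<open>c\<close> and the states splits slot by slot into \<open>H(U)\<close>, the entropy of the erasure
  patterns, and \<open>P(c)\<close> times a sum of conditional packet entropies
  (\<open>entropy_observations\<close>).  Fano's inequality for both decoders, secrecy towards
  Calvin, and monotonicity of these sums in the listener give four linear
  inequalities that eliminate to a weighted bound on the message sizes
  (\<open>rate_inequality\<close>); exchanging Bob and Calvin gives the second bound.
  Normalising by the blocklength and letting the error tend to zero
  (\<open>rate_limit\<close>) yields the theorem.
\<close>
section \<open>Entropy of finitely supported distributions\<close>

text \<open>Shannon entropy (base 2) of a discrete distribution; all distributions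
  occurring below have finite support.\<close>
definition pmf_entropy :: "'a pmf \<Rightarrow> real" where
  "pmf_entropy d = (\<Sum>x\<in>set_pmf d. - pmf d x * log 2 (pmf d x))"

lemma pmf_entropy_sum: "pmf_entropy d = - (\<Sum>z\<in>set_pmf d. pmf d z * log 2 (pmf d z))"
  unfolding pmf_entropy_def by (simp add: sum_negf)

lemma pmf_entropy_integral:
  assumes "finite (set_pmf d)"
  shows "pmf_entropy d = - (\<integral>x. log 2 (pmf d x) \<partial>measure_pmf d)"
proof -
  have "(\<integral>x. log 2 (pmf d x) \<partial>measure_pmf d) = (\<Sum>a\<in>set_pmf d. log 2 (pmf d a) * pmf d a)"
    by (rule integral_measure_pmf_real) (use assms in auto)
  then show ?thesis unfolding pmf_entropy_sum by (simp add: mult.commute)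
qed

lemma pmf_entropy_map_sum:
  assumes fin: "finite (set_pmf d)"
  shows "pmf_entropy (map_pmf g d) = - (\<Sum>z\<in>set_pmf d. pmf d z * log 2 (pmf (map_pmf g d) (g z)))"
proof -
  have "(\<integral>x. log 2 (pmf (map_pmf g d) (g x)) \<partial>measure_pmf d)
      = (\<Sum>z\<in>set_pmf d. log 2 (pmf (map_pmf g d) (g z)) * pmf d z)"
    by (rule integral_measure_pmf_real) (use fin in auto)
  then show ?thesis using fin by (simp add: pmf_entropy_integral integral_map_pmf mult.commute)
qed

text \<open>Gibbs' inequality in cross-entropy form: the entropy of \<open>p\<close> is at most
  the expected code length \<open>- log r\<close> of any sub-probability weighting \<open>r\<close> that is
  positive on the support of \<open>p\<close>.  All entropy upper bounds below
  (cardinality bound, submodularity, Fano) are instances of it.\<close>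
lemma pmf_entropy_le_cross_entropy:
  assumes fin: "finite (set_pmf p)" and rpos: "\<And>x. x \<in> set_pmf p \<Longrightarrow> 0 < r x"
    and rsum: "(\<Sum>x\<in>set_pmf p. r x) \<le> 1"
  shows "pmf_entropy p \<le> - (\<Sum>x\<in>set_pmf p. pmf p x * log 2 (r x))"
proof -
  have "(\<Sum>x\<in>set_pmf p. pmf p x * ln (r x / pmf p x)) \<le> (\<Sum>x\<in>set_pmf p. pmf p x * (r x / pmf p x - 1))"
    by (intro sum_mono mult_left_mono ln_le_minus_one) (auto intro: rpos pmf_positive divide_pos_pos)
  also have "\<dots> = (\<Sum>x\<in>set_pmf p. r x) - (\<Sum>x\<in>set_pmf p. pmf p x)"
    by (auto simp: sum_subtractf[symmetric] field_simps dest: pmf_positive intro!: sum.cong)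
  also have "(\<Sum>x\<in>set_pmf p. pmf p x) = 1" by (rule sum_pmf_eq_1) (use fin in auto)
  finally have "(\<Sum>x\<in>set_pmf p. pmf p x * ln (r x / pmf p x)) / ln 2 \<le> 0"
    using rsum by (simp add: divide_nonpos_pos)
  then have gibbs: "(\<Sum>x\<in>set_pmf p. pmf p x * log 2 (r x / pmf p x)) \<le> 0"
    by (simp add: log_def sum_divide_distrib)
  have "(\<Sum>x\<in>set_pmf p. pmf p x * log 2 (r x / pmf p x))
      = (\<Sum>x\<in>set_pmf p. pmf p x * log 2 (r x)) - (\<Sum>x\<in>set_pmf p. pmf p x * log 2 (pmf p x))"
    unfolding sum_subtractf[symmetric]
  proof (intro sum.cong refl)
    fix x assume x: "x \<in> set_pmf p"
    show "pmf p x * log 2 (r x / pmf p x) = pmf p x * log 2 (r x) - pmf p x * log 2 (pmf p x)"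
      using rpos[OF x] pmf_positive[OF x] by (simp add: log_divide algebra_simps)
  qed
  with gibbs show ?thesis unfolding pmf_entropy_sum by linarith
qed

lemma pmf_entropy_le_log_card:
  assumes B: "finite B" "set_pmf d \<subseteq> B"
  shows "pmf_entropy d \<le> log 2 (card B)"
proof -
  have fin: "finite (set_pmf d)" using B finite_subset by blast
  have cB: "card B > 0" using B set_pmf_not_empty[of d] by (auto simp: card_gt_0_iff)
  have "(\<Sum>x\<in>set_pmf d. 1 / card B) \<le> 1"
    using card_mono[OF B] cB by (simp add: field_simps)
  from pmf_entropy_le_cross_entropy[OF fin _ this] cB
  have "pmf_entropy d \<le> - (\<Sum>x\<in>set_pmf d. pmf d x) * log 2 (1 / card B)"
    by (simp add: sum_distrib_right)
  also have "(\<Sum>x\<in>set_pmf d. pmf d x) = 1" by (rule sum_pmf_eq_1) (use fin in auto)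
  finally show ?thesis using cB by (simp add: log_recip)
qed

lemma pmf_entropy_map_inj:
  assumes "inj_on g (set_pmf d)"
  shows "pmf_entropy (map_pmf g d) = pmf_entropy d"
  unfolding pmf_entropy_def set_map_pmf
  by (subst sum.reindex[OF assms]) (simp add: pmf_map_inj[OF assms])

lemma pmf_entropy_map_le:
  assumes fin: "finite (set_pmf d)"
  shows "pmf_entropy (map_pmf g d) \<le> pmf_entropy d"
proof -
  have "(\<Sum>z\<in>set_pmf d. pmf d z * log 2 (pmf d z)) \<le> (\<Sum>z\<in>set_pmf d. pmf d z * log 2 (pmf (map_pmf g d) (g z)))"
  proof (intro sum_mono mult_left_mono)
    fix x assume x: "x \<in> set_pmf d"
    have "pmf d x = measure_pmf.prob d {x}" by (simp add: measure_pmf_single)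
    also have "\<dots> \<le> measure_pmf.prob d (g -` {g x})" by (rule measure_pmf.finite_measure_mono) auto
    also have "\<dots> = pmf (map_pmf g d) (g x)" by (simp add: pmf_map)
    finally show "log 2 (pmf d x) \<le> log 2 (pmf (map_pmf g d) (g x))"
      using pmf_positive[OF x] by simp
  qed simp
  then show ?thesis using pmf_entropy_map_sum[OF fin, of g] pmf_entropy_sum[of d] by linarith
qed

lemma pmf_entropy_pair:
  assumes fa: "finite (set_pmf A)" and fb: "finite (set_pmf B)"
  shows "pmf_entropy (pair_pmf A B) = pmf_entropy A + pmf_entropy B"
proof -
  have fin: "finite (set_pmf (pair_pmf A B))" using fa fb by simp
  have "(\<integral>z. log 2 (pmf (pair_pmf A B) z) \<partial>measure_pmf (pair_pmf A B))
      = (\<integral>z. log 2 (pmf A (fst z)) + log 2 (pmf B (snd z)) \<partial>measure_pmf (pair_pmf A B))"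
    by (intro integral_cong_AE AE_pmfI) (auto simp: pmf_pair log_mult set_pmf_iff)
  also have "\<dots> = (\<integral>z. log 2 (pmf A (fst z)) \<partial>measure_pmf (pair_pmf A B))
                 + (\<integral>z. log 2 (pmf B (snd z)) \<partial>measure_pmf (pair_pmf A B))"
    by (intro Bochner_Integration.integral_add integrable_measure_pmf_finite fin)
  also have "(\<integral>z. log 2 (pmf A (fst z)) \<partial>measure_pmf (pair_pmf A B)) = (\<integral>x. log 2 (pmf A x) \<partial>measure_pmf A)"
    using integral_map_pmf[of fst "pair_pmf A B" "\<lambda>x. log 2 (pmf A x)"] by (simp only: map_fst_pair_pmf)
  also have "(\<integral>z. log 2 (pmf B (snd z)) \<partial>measure_pmf (pair_pmf A B)) = (\<integral>x. log 2 (pmf B x) \<partial>measure_pmf B)"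
    using integral_map_pmf[of snd "pair_pmf A B" "\<lambda>x. log 2 (pmf B x)"] by (simp only: map_snd_pair_pmf)
  finally show ?thesis using pmf_entropy_integral[OF fa] pmf_entropy_integral[OF fb] pmf_entropy_integral[OF fin]
    by simp
qed

lemma pmf_entropy_uniform:
  assumes "finite S" "S \<noteq> {}"
  shows "pmf_entropy (pmf_of_set S) = log 2 (card S)"
proof -
  have c: "card S > 0" using assms by (simp add: card_gt_0_iff)
  have "pmf_entropy (pmf_of_set S) = (\<Sum>x\<in>S. - (1 / card S) * log 2 (1 / card S))"
    unfolding pmf_entropy_def using assms by (intro sum.cong) auto
  also have "\<dots> = log 2 (card S)" using c by (simp add: log_recip)
  finally show ?thesis .
qed

lemma pmf_labelled_mixture:
  assumes "e \<in> set_pmf E"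
  shows "pmf (E \<bind> (\<lambda>e. map_pmf (\<lambda>z. (e, F e z)) D)) (e, y) = pmf E e * pmf (map_pmf (F e) D) y"
proof -
  have inner: "pmf (map_pmf (\<lambda>z. (e', F e' z)) D) (e, y) = (if e' = e then pmf (map_pmf (F e) D) y else 0)" for e'
  proof (cases "e' = e")
    case True
    then show ?thesis by (simp add: pmf_map vimage_def)
  next
    case False
    then have "(\<lambda>z. (e', F e' z)) -` {(e, y)} = {}" by auto
    then show ?thesis using False by (simp add: pmf_map)
  qed
  have "pmf (E \<bind> (\<lambda>e. map_pmf (\<lambda>z. (e, F e z)) D)) (e, y)
      = (\<integral>e'. (if e' = e then pmf (map_pmf (F e) D) y else 0) \<partial>measure_pmf E)"
    by (simp add: pmf_bind inner)
  also have "\<dots> = (\<Sum>a\<in>{e}. (if a = e then pmf (map_pmf (F e) D) y else 0) * pmf E a)"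
    by (rule integral_measure_pmf_real) (auto split: if_splits)
  finally show ?thesis by simp
qed

lemma pmf_entropy_labelled:
  assumes fD: "finite (set_pmf D)" and fE: "finite (set_pmf E)"
  shows "pmf_entropy (E \<bind> (\<lambda>e. map_pmf (\<lambda>z. (e, F e z)) D))
       = pmf_entropy E + (\<Sum>e\<in>set_pmf E. pmf E e * pmf_entropy (map_pmf (F e) D))"
proof -
  let ?Z = "E \<bind> (\<lambda>e. map_pmf (\<lambda>z. (e, F e z)) D)"
  let ?G = "\<lambda>e. map_pmf (F e) D"
  have setZ: "set_pmf ?Z = Sigma (set_pmf E) (\<lambda>e. set_pmf (?G e))"
    by (auto simp: set_bind_pmf)
  have finG: "\<And>e. finite (set_pmf (?G e))" using fD by simp
  have sumG: "\<And>e. (\<Sum>y\<in>set_pmf (?G e). pmf (?G e) y) = 1"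
    by (rule sum_pmf_eq_1) (use finG in auto)
  have "pmf_entropy ?Z = (\<Sum>e\<in>set_pmf E. \<Sum>y\<in>set_pmf (?G e). - pmf ?Z (e,y) * log 2 (pmf ?Z (e,y)))"
    unfolding pmf_entropy_def setZ by (subst sum.Sigma) (use fE finG in \<open>auto simp: case_prod_unfold\<close>)
  also have "\<dots> = (\<Sum>e\<in>set_pmf E. (- pmf E e * log 2 (pmf E e)) * (\<Sum>y\<in>set_pmf (?G e). pmf (?G e) y)
       + pmf E e * pmf_entropy (?G e))"
  proof (intro sum.cong refl)
    fix e assume e: "e \<in> set_pmf E"
    have "(\<Sum>y\<in>set_pmf (?G e). - pmf ?Z (e,y) * log 2 (pmf ?Z (e,y)))
      = (\<Sum>y\<in>set_pmf (?G e). (- pmf E e * log 2 (pmf E e)) * pmf (?G e) y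
          + pmf E e * (- pmf (?G e) y * log 2 (pmf (?G e) y)))"
    proof (rule sum.cong[OF refl])
      fix y assume y: "y \<in> set_pmf (?G e)"
      show "- pmf ?Z (e,y) * log 2 (pmf ?Z (e,y)) = (- pmf E e * log 2 (pmf E e)) * pmf (?G e) y
          + pmf E e * (- pmf (?G e) y * log 2 (pmf (?G e) y))"
        unfolding pmf_labelled_mixture[OF e] using pmf_positive[OF e] pmf_positive[OF y]
        by (simp add: log_mult algebra_simps)
    qed
    then show "(\<Sum>y\<in>set_pmf (?G e). - pmf ?Z (e,y) * log 2 (pmf ?Z (e,y)))
      = (- pmf E e * log 2 (pmf E e)) * (\<Sum>y\<in>set_pmf (?G e). pmf (?G e) y) + pmf E e * pmf_entropy (?G e)"
      unfolding pmf_entropy_def by (simp only: sum.distrib sum_distrib_left)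
  qed
  also have "\<dots> = pmf_entropy E + (\<Sum>e\<in>set_pmf E. pmf E e * pmf_entropy (?G e))"
    unfolding sumG pmf_entropy_def[of E] by (simp add: sum.distrib[symmetric] algebra_simps)
  finally show ?thesis .
qed

lemma pmf_fst_marginal_sum:
  assumes fin: "finite SB" and sub: "snd ` set_pmf e \<subseteq> SB"
  shows "pmf (map_pmf fst e) a = (\<Sum>b\<in>SB. pmf e (a, b))"
proof -
  have "pmf (map_pmf fst e) a = measure_pmf.prob e ((fst -` {a}) \<inter> set_pmf e)"
    by (simp add: pmf_map measure_Int_set_pmf)
  also have "(fst -` {a}) \<inter> set_pmf e = (Pair a ` SB) \<inter> set_pmf e" using sub by force
  also have "measure_pmf.prob e ((Pair a ` SB) \<inter> set_pmf e) = sum (pmf e) (Pair a ` SB)"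
    using fin by (simp add: measure_Int_set_pmf measure_measure_pmf_finite)
  also have "\<dots> = (\<Sum>b\<in>SB. pmf e (a, b))" by (subst sum.reindex) (auto simp: inj_on_def)
  finally show ?thesis .
qed

text \<open>For a joint law of \<open>(x, a, b)\<close>, the weight \<open>p(x,a) p(a,b) / p(a)\<close> (the law
  of a Markov chain \<open>x - a - b\<close> with the same pair marginals) has total mass at
  most one on the support.\<close>
lemma markov_weight_sum_le_1:
  fixes d :: "('x \<times> 'a \<times> 'b) pmf"
  assumes fin: "finite (set_pmf d)"
  defines "XA \<equiv> map_pmf (\<lambda>(x,a,b). (x,a)) d" and "AB \<equiv> map_pmf (\<lambda>(x,a,b). (a,b)) d"
    and "A \<equiv> map_pmf (\<lambda>(x,a,b). a) d"
  shows "(\<Sum>(x,a,b)\<in>set_pmf d. pmf XA (x,a) * pmf AB (a,b) / pmf A a) \<le> 1"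
proof -
  define r where "r = (\<lambda>(x,a,b). pmf XA (x,a) * pmf AB (a,b) / pmf A a)"
  define SB where "SB = (\<lambda>(x,a,b). b) ` set_pmf d"
  have finSB: "finite SB" unfolding SB_def using fin by simp
  have finXA: "finite (set_pmf XA)" unfolding XA_def using fin by simp
  have sub: "set_pmf d \<subseteq> (\<lambda>((x,a),b). (x,a,b)) ` (set_pmf XA \<times> SB)"
    unfolding XA_def SB_def by (force simp: image_iff)
  have rnn: "0 \<le> r z" for z unfolding r_def by (auto split: prod.splits)
  have "(\<Sum>z\<in>set_pmf d. r z) \<le> (\<Sum>z\<in>(\<lambda>((x,a),b). (x,a,b)) ` (set_pmf XA \<times> SB). r z)"
    by (rule sum_mono2) (use sub finXA finSB rnn in auto)
  also have "\<dots> = (\<Sum>p\<in>set_pmf XA. \<Sum>b\<in>SB. r ((\<lambda>((x,a),b). (x,a,b)) (p,b)))"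
    by (subst sum.reindex) (auto simp: inj_on_def sum.cartesian_product case_prod_unfold)
  also have "\<dots> = (\<Sum>p\<in>set_pmf XA. pmf XA p)"
  proof (rule sum.cong[OF refl])
    fix p assume p: "p \<in> set_pmf XA"
    obtain x a where pp: "p = (x,a)" by (cases p) auto
    have aA: "a \<in> set_pmf A" using p pp unfolding XA_def A_def by force
    have mA: "map_pmf fst AB = A" unfolding AB_def A_def by (simp add: pmf.map_comp comp_def case_prod_unfold)
    have sAB: "snd ` set_pmf AB \<subseteq> SB" unfolding AB_def SB_def by force
    have "(\<Sum>b\<in>SB. pmf AB (a,b)) = pmf A a"
      using pmf_fst_marginal_sum[OF finSB sAB, of a] mA by simp
    then show "(\<Sum>b\<in>SB. r ((\<lambda>((x,a),b). (x,a,b)) (p,b))) = pmf XA p"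
      using pp pmf_positive[OF aA] unfolding r_def
      by (simp add: sum_divide_distrib[symmetric] sum_distrib_left[symmetric])
  qed
  also have "\<dots> = 1" by (rule sum_pmf_eq_1) (use finXA in auto)
  finally show ?thesis unfolding r_def .
qed

lemma pmf_entropy_submodular:
  fixes d :: "('x \<times> 'a \<times> 'b) pmf"
  assumes fin: "finite (set_pmf d)"
  shows "pmf_entropy d + pmf_entropy (map_pmf (\<lambda>(x,a,b). a) d)
       \<le> pmf_entropy (map_pmf (\<lambda>(x,a,b). (x,a)) d) + pmf_entropy (map_pmf (\<lambda>(x,a,b). (a,b)) d)"
proof -
  define XA where "XA = map_pmf (\<lambda>(x,a,b). (x,a)) d"
  define AB where "AB = map_pmf (\<lambda>(x,a,b). (a,b)) d"
  define A where "A = map_pmf (\<lambda>(x,a,b). a) d"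
  define r where "r = (\<lambda>(x,a,b). pmf XA (x,a) * pmf AB (a,b) / pmf A a)"
  have pos: "0 < pmf XA (x,a)" "0 < pmf AB (a,b)" "0 < pmf A a" if "(x,a,b) \<in> set_pmf d" for x a b
    using that unfolding XA_def AB_def A_def by (auto intro!: pmf_positive) force+
  have "pmf_entropy d \<le> - (\<Sum>z\<in>set_pmf d. pmf d z * log 2 (r z))"
  proof (rule pmf_entropy_le_cross_entropy[OF fin])
    show "0 < r z" if "z \<in> set_pmf d" for z
      using that pos unfolding r_def by (cases z) auto
    show "(\<Sum>z\<in>set_pmf d. r z) \<le> 1"
      using markov_weight_sum_le_1[OF fin] unfolding r_def XA_def AB_def A_def .
  qed
  also have "(\<Sum>z\<in>set_pmf d. pmf d z * log 2 (r z))
      = (\<Sum>z\<in>set_pmf d. pmf d z * log 2 (pmf XA ((\<lambda>(x,a,b). (x,a)) z)))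
      + (\<Sum>z\<in>set_pmf d. pmf d z * log 2 (pmf AB ((\<lambda>(x,a,b). (a,b)) z)))
      - (\<Sum>z\<in>set_pmf d. pmf d z * log 2 (pmf A ((\<lambda>(x,a,b). a) z)))"
    unfolding sum.distrib[symmetric] sum_subtractf[symmetric]
  proof (intro sum.cong refl)
    fix z assume z: "z \<in> set_pmf d"
    obtain x a b where zz: "z = (x,a,b)" by (cases z) auto
    show "pmf d z * log 2 (r z) = pmf d z * log 2 (pmf XA ((\<lambda>(x,a,b). (x,a)) z))
      + pmf d z * log 2 (pmf AB ((\<lambda>(x,a,b). (a,b)) z)) - pmf d z * log 2 (pmf A ((\<lambda>(x,a,b). a) z))"
      using pos[of x a b] z unfolding zz by (simp add: r_def log_divide log_mult algebra_simps)
  qed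
  finally show ?thesis
    unfolding pmf_entropy_map_sum[OF fin] XA_def AB_def A_def by simp
qed

section \<open>Entropy of random variables\<close>

text \<open>\<open>H p X\<close> is the entropy of the random variable \<open>X\<close> on the probability
  space \<open>p\<close>; conditional entropies appear as differences \<open>H(X,Z) - H(Z)\<close>.\<close>
definition H :: "'o pmf \<Rightarrow> ('o \<Rightarrow> 'x) \<Rightarrow> real" where
  "H p X = pmf_entropy (map_pmf X p)"

lemma H_cong: "(\<And>\<omega>. \<omega> \<in> set_pmf p \<Longrightarrow> X \<omega> = Y \<omega>) \<Longrightarrow> H p X = H p Y"
  unfolding H_def by (metis map_pmf_cong)

lemma H_inj: "inj g \<Longrightarrow> H p (\<lambda>\<omega>. g (X \<omega>)) = H p X"
  unfolding H_def map_pmf_comp[symmetric, of g X p, unfolded comp_def]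
  by (rule pmf_entropy_map_inj) (simp add: inj_on_def inj_def)

lemma H_map_le: "finite (set_pmf p) \<Longrightarrow> H p (\<lambda>\<omega>. g (X \<omega>)) \<le> H p X"
  unfolding H_def map_pmf_comp[symmetric, of g X p, unfolded comp_def]
  by (rule pmf_entropy_map_le) simp

lemma H_const [simp]: "H p (\<lambda>\<omega>. c) = 0"
  unfolding H_def by (simp add: map_pmf_const pmf_entropy_def)

lemma H_swap: "H p (\<lambda>\<omega>. (A \<omega>, B \<omega>)) = H p (\<lambda>\<omega>. (B \<omega>, A \<omega>))"
  using H_inj[of "\<lambda>(a,b). (b,a)" p "\<lambda>\<omega>. (B \<omega>, A \<omega>)"] by (simp add: inj_def)

lemma H_le_log_card: "finite B \<Longrightarrow> (\<And>\<omega>. \<omega> \<in> set_pmf p \<Longrightarrow> X \<omega> \<in> B) \<Longrightarrow> H p X \<le> log 2 (card B)"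
  unfolding H_def by (rule pmf_entropy_le_log_card) auto

lemma H_submodular:
  assumes fin: "finite (set_pmf p)"
  shows "H p (\<lambda>\<omega>. (X \<omega>, A \<omega>, B \<omega>)) + H p A \<le> H p (\<lambda>\<omega>. (X \<omega>, A \<omega>)) + H p (\<lambda>\<omega>. (A \<omega>, B \<omega>))"
proof -
  let ?d = "map_pmf (\<lambda>\<omega>. (X \<omega>, A \<omega>, B \<omega>)) p"
  have "finite (set_pmf ?d)" using fin by simp
  from pmf_entropy_submodular[OF this] show ?thesis unfolding H_def map_pmf_comp by (simp add: o_def)
qed

lemma cond_entropy_mono:
  assumes fin: "finite (set_pmf p)" and V: "\<And>\<omega>. \<omega> \<in> set_pmf p \<Longrightarrow> V \<omega> = g (Z \<omega>)"
  shows "H p (\<lambda>\<omega>. (X \<omega>, Z \<omega>)) - H p Z \<le> H p (\<lambda>\<omega>. (X \<omega>, V \<omega>)) - H p V"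
proof -
  have "H p (\<lambda>\<omega>. (X \<omega>, V \<omega>, Z \<omega>)) = H p (\<lambda>\<omega>. (\<lambda>(x,z). (x, g z, z)) (X \<omega>, Z \<omega>))"
    by (rule H_cong) (simp add: V)
  also have "\<dots> = H p (\<lambda>\<omega>. (X \<omega>, Z \<omega>))" by (rule H_inj) (auto simp: inj_def)
  finally have XVZ: "H p (\<lambda>\<omega>. (X \<omega>, V \<omega>, Z \<omega>)) = H p (\<lambda>\<omega>. (X \<omega>, Z \<omega>))" .
  have "H p (\<lambda>\<omega>. (V \<omega>, Z \<omega>)) = H p (\<lambda>\<omega>. (\<lambda>z. (g z, z)) (Z \<omega>))"
    by (rule H_cong) (simp add: V)
  also have "\<dots> = H p Z" by (rule H_inj) (auto simp: inj_def)
  finally have VZ: "H p (\<lambda>\<omega>. (V \<omega>, Z \<omega>)) = H p Z" .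
  show ?thesis using H_submodular[OF fin, of X V Z] XVZ VZ by simp
qed

lemma cond_entropy_mono_left:
  assumes fin: "finite (set_pmf p)" and V: "\<And>\<omega>. \<omega> \<in> set_pmf p \<Longrightarrow> V \<omega> = g (Z \<omega>)"
  shows "H p (\<lambda>\<omega>. (Z \<omega>, X \<omega>)) - H p Z \<le> H p (\<lambda>\<omega>. (V \<omega>, X \<omega>)) - H p V"
  using cond_entropy_mono[where X=X and V=V and g=g and Z=Z, OF fin V] H_swap[of p Z X] H_swap[of p V X] by simp

lemma cond_entropy_le:
  assumes fin: "finite (set_pmf p)"
  shows "H p (\<lambda>\<omega>. (X \<omega>, A \<omega>)) - H p A \<le> H p X"
proof -
  have "H p (\<lambda>\<omega>. (X \<omega>, A \<omega>)) - H p A \<le> H p (\<lambda>\<omega>. (X \<omega>, ())) - H p (\<lambda>\<omega>. ())"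
    by (rule cond_entropy_mono[OF fin]) auto
  also have "H p (\<lambda>\<omega>. (X \<omega>, ())) = H p X" by (rule H_inj[of "\<lambda>x. (x, ())", simplified]) (auto simp: inj_def)
  finally show ?thesis by simp
qed

section \<open>Fano's inequality\<close>

lemma sum_pmf_indicator:
  assumes "finite (set_pmf d)"
  shows "(\<Sum>z\<in>set_pmf d. pmf d z * (if z \<in> S then 1 else 0)) = measure_pmf.prob d S"
proof -
  have "measure_pmf.prob d S = measure_pmf.prob d (S \<inter> set_pmf d)" by (simp add: measure_Int_set_pmf)
  also have "\<dots> = sum (pmf d) (S \<inter> set_pmf d)" using assms by (simp add: measure_measure_pmf_finite)
  also have "\<dots> = (\<Sum>z\<in>set_pmf d. if z \<in> S then pmf d z else 0)"
    using assms by (subst Int_commute) (simp add: sum.inter_restrict)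
  finally show ?thesis by (simp add: if_distrib cong: if_cong)
qed

text \<open>The reference channel used in the proof of Fano's inequality: a guess is
  correct with probability \<open>1 - eps\<close> and otherwise uniformly wrong among \<open>c\<close>
  messages.\<close>
definition fano_weight :: "real \<Rightarrow> real \<Rightarrow> 'b \<times> 'b \<Rightarrow> real" where
  "fano_weight eps c = (\<lambda>(w, v). if w = v then 1 - eps else eps / c)"

lemma fano_weight_pos: "0 < eps \<Longrightarrow> eps < 1 \<Longrightarrow> 1 \<le> c \<Longrightarrow> 0 < fano_weight eps c z"
  unfolding fano_weight_def by (auto split: prod.splits)

lemma fano_weight_code_length:
  assumes fd: "finite (set_pmf d)" and e: "0 < eps" "eps < 1" and c: "1 \<le> c"
    and err: "measure_pmf.prob d {z. fst z \<noteq> snd z} \<le> eps"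
  shows "- (\<Sum>z\<in>set_pmf d. pmf d z * log 2 (fano_weight eps c z))
         \<le> - log 2 (1 - eps) - eps * log 2 eps + eps * log 2 c"
proof -
  define K where "K = log 2 c - log 2 eps"
  have K0: "K \<ge> 0" unfolding K_def using c e by simp
  have "- (\<Sum>z\<in>set_pmf d. pmf d z * log 2 (fano_weight eps c z))
      \<le> (\<Sum>z\<in>set_pmf d. pmf d z * (- log 2 (1 - eps) + K * (if z \<in> {z. fst z \<noteq> snd z} then 1 else 0)))"
    unfolding sum_negf[symmetric]
  proof (intro sum_mono)
    fix z assume "z \<in> set_pmf d"
    have "- log 2 (fano_weight eps c z) \<le> - log 2 (1 - eps) + K * (if z \<in> {z. fst z \<noteq> snd z} then 1 else 0)"
      using e c by (cases z) (auto simp: fano_weight_def K_def log_divide)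
    then have "pmf d z * (- log 2 (fano_weight eps c z))
      \<le> pmf d z * (- log 2 (1 - eps) + K * (if z \<in> {z. fst z \<noteq> snd z} then 1 else 0))"
      by (rule mult_left_mono) simp
    then show "- (pmf d z * log 2 (fano_weight eps c z))
      \<le> pmf d z * (- log 2 (1 - eps) + K * (if z \<in> {z. fst z \<noteq> snd z} then 1 else 0))"
      by simp
  qed
  also have "\<dots> = - log 2 (1 - eps) * (\<Sum>z\<in>set_pmf d. pmf d z)
       + K * (\<Sum>z\<in>set_pmf d. pmf d z * (if z \<in> {z. fst z \<noteq> snd z} then 1 else 0))"
    by (simp add: sum.distrib[symmetric] sum_distrib_left sum_distrib_right algebra_simps)
  also have "\<dots> = - log 2 (1 - eps) + K * measure_pmf.prob d {z. fst z \<noteq> snd z}"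
    unfolding sum_pmf_indicator[OF fd] by (simp add: sum_pmf_eq_1 fd)
  also have "\<dots> \<le> - log 2 (1 - eps) + K * eps" using K0 err by (simp add: mult_left_mono)
  finally show ?thesis unfolding K_def by (simp add: algebra_simps)
qed

lemma fano_reference_mass:
  assumes M: "finite M" "M \<noteq> {}" and fd: "finite (set_pmf d)" and sub: "fst ` set_pmf d \<subseteq> M"
    and e: "0 < eps" "eps < 1"
  shows "(\<Sum>z\<in>set_pmf d. pmf (map_pmf snd d) (snd z) * fano_weight eps (card M) z) \<le> 1"
proof -
  define pV where "pV = map_pmf snd d"
  define c where "c = real (card M)"
  have c1: "c \<ge> 1" unfolding c_def using M by (simp add: Suc_leI card_gt_0_iff)
  have fV: "finite (set_pmf pV)" unfolding pV_def using fd by simp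
  have weight_sum: "(\<Sum>w\<in>M. fano_weight eps c (w, v)) \<le> 1" for v
  proof -
    have "(\<Sum>w\<in>M. fano_weight eps c (w, v)) \<le> (\<Sum>w\<in>M. eps / c + (if w = v then 1 - eps else 0))"
      by (rule sum_mono) (use e c1 in \<open>auto simp: fano_weight_def\<close>)
    also have "\<dots> \<le> 1" using c1 e by (simp add: sum.distrib c_def M)
    finally show ?thesis .
  qed
  have rnn: "0 \<le> pmf pV (snd z) * fano_weight eps c z" for z
    using fano_weight_pos[OF e c1, of z] by simp
  have "set_pmf d \<subseteq> M \<times> set_pmf pV" unfolding pV_def using sub by force
  then have "(\<Sum>z\<in>set_pmf d. pmf pV (snd z) * fano_weight eps c z) \<le> (\<Sum>z\<in>M \<times> set_pmf pV. pmf pV (snd z) * fano_weight eps c z)"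
    by (rule sum_mono2[rotated]) (use M fV rnn in auto)
  also have "\<dots> = (\<Sum>w\<in>M. \<Sum>v\<in>set_pmf pV. pmf pV v * fano_weight eps c (w, v))"
    by (simp add: sum.cartesian_product case_prod_unfold)
  also have "\<dots> = (\<Sum>v\<in>set_pmf pV. pmf pV v * (\<Sum>w\<in>M. fano_weight eps c (w, v)))"
    by (subst sum.swap) (simp add: sum_distrib_left)
  also have "\<dots> \<le> (\<Sum>v\<in>set_pmf pV. pmf pV v)"
    using mult_left_mono[OF weight_sum pmf_nonneg] by (intro sum_mono) simp
  also have "\<dots> = 1" by (simp add: sum_pmf_eq_1 fV)
  finally show ?thesis unfolding pV_def c_def .
qed

text \<open>Fano's inequality: if \<open>V\<close> is a guess of the \<open>M\<close>-valued \<open>W\<close> that errs with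
  probability at most \<open>eps\<close>, then \<open>H(W | V) \<le> h(eps) + eps log |M|\<close>, with the
  binary entropy \<open>h(eps)\<close> replaced by the slightly larger \<open>- log (1 - eps) - eps log eps\<close>.\<close>
lemma fano_inequality:
  fixes W V :: "'a \<Rightarrow> 'b"
  assumes fin: "finite (set_pmf p)" and M: "finite M" "M \<noteq> {}" and WM: "\<And>\<omega>. \<omega> \<in> set_pmf p \<Longrightarrow> W \<omega> \<in> M"
    and err: "measure_pmf.prob p {\<omega>. V \<omega> \<noteq> W \<omega>} \<le> eps" and e: "0 < eps" "eps < 1"
  shows "H p (\<lambda>\<omega>. (W \<omega>, V \<omega>)) - H p V \<le> - log 2 (1 - eps) - eps * log 2 eps + eps * log 2 (card M)"
proof -
  define d where "d = map_pmf (\<lambda>\<omega>. (W \<omega>, V \<omega>)) p"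
  define pV where "pV = map_pmf snd d"
  define c where "c = real (card M)"
  define r where "r = (\<lambda>z. pmf pV (snd z) * fano_weight eps c z)"
  have c1: "c \<ge> 1" unfolding c_def using M by (simp add: Suc_leI card_gt_0_iff)
  have fd: "finite (set_pmf d)" unfolding d_def using fin by simp
  have HV: "H p V = pmf_entropy pV" unfolding H_def pV_def d_def by (simp add: map_pmf_comp)
  have vin: "snd z \<in> set_pmf pV" if "z \<in> set_pmf d" for z using that unfolding pV_def by auto
  have "pmf_entropy d \<le> - (\<Sum>z\<in>set_pmf d. pmf d z * log 2 (r z))"
  proof (rule pmf_entropy_le_cross_entropy[OF fd])
    show "0 < r z" if "z \<in> set_pmf d" for z
      unfolding r_def using pmf_positive[OF vin[OF that]] fano_weight_pos[OF e c1, of z] by simp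
    show "(\<Sum>z\<in>set_pmf d. r z) \<le> 1"
      unfolding r_def pV_def c_def by (rule fano_reference_mass[OF M fd _ e]) (use WM in \<open>auto simp: d_def\<close>)
  qed
  also have "(\<Sum>z\<in>set_pmf d. pmf d z * log 2 (r z))
      = (\<Sum>z\<in>set_pmf d. pmf d z * log 2 (pmf pV (snd z))) + (\<Sum>z\<in>set_pmf d. pmf d z * log 2 (fano_weight eps c z))"
    unfolding sum.distrib[symmetric]
  proof (intro sum.cong refl)
    fix z assume z: "z \<in> set_pmf d"
    show "pmf d z * log 2 (r z) = pmf d z * log 2 (pmf pV (snd z)) + pmf d z * log 2 (fano_weight eps c z)"
      using pmf_positive[OF vin[OF z]] fano_weight_pos[OF e c1, of z] by (simp add: r_def log_mult algebra_simps)
  qed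
  also have "(\<Sum>z\<in>set_pmf d. pmf d z * log 2 (pmf pV (snd z))) = - H p V"
    using pmf_entropy_map_sum[OF fd, of snd] unfolding HV pV_def by simp
  finally have "H p (\<lambda>\<omega>. (W \<omega>, V \<omega>)) - H p V \<le> - (\<Sum>z\<in>set_pmf d. pmf d z * log 2 (fano_weight eps c z))"
    unfolding H_def d_def by simp
  also have "\<dots> \<le> - log 2 (1 - eps) - eps * log 2 eps + eps * log 2 c"
    by (rule fano_weight_code_length[OF fd e c1]) (use err in \<open>simp add: d_def vimage_def eq_commute\<close>)
  finally show ?thesis unfolding c_def .
qed

section \<open>Mutual information of discrete random variables\<close>

lemma distributed_pmf:
  fixes X :: "'a \<Rightarrow> 'b"
  shows "distributed (measure_pmf P) (count_space UNIV) X (\<lambda>x. ennreal (pmf (map_pmf X P) x))"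
proof -
  have "distr (measure_pmf P) (count_space UNIV) X = density (count_space UNIV) (\<lambda>x. ennreal (pmf (map_pmf X P) x))"
    by (subst map_pmf_rep_eq[symmetric]) (rule measure_pmf_eq_density)
  then show ?thesis unfolding distributed_def by auto
qed

lemma MI_pmf:
  fixes X :: "'a \<Rightarrow> 'b::countable" and Y :: "'a \<Rightarrow> 'c::countable"
  shows "MI P X Y = (\<integral>z. log 2 (pmf (map_pmf (\<lambda>\<omega>. (X \<omega>, Y \<omega>)) P) z
          / (pmf (map_pmf X P) (fst z) * pmf (map_pmf Y P) (snd z))) \<partial>measure_pmf (map_pmf (\<lambda>\<omega>. (X \<omega>, Y \<omega>)) P))"
proof -
  interpret information_space "measure_pmf P" 2 by standard simp
  let ?J = "map_pmf (\<lambda>\<omega>. (X \<omega>, Y \<omega>)) P"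
  have sf1: "sigma_finite_measure (count_space (UNIV :: 'b set))"
    by (rule sigma_finite_measure_count_space_countable) simp
  have sf2: "sigma_finite_measure (count_space (UNIV :: 'c set))"
    by (rule sigma_finite_measure_count_space_countable) simp
  have pm: "count_space (UNIV :: 'b set) \<Otimes>\<^sub>M count_space (UNIV :: 'c set) = count_space UNIV"
    using pair_measure_countable[of "UNIV :: 'b set" "UNIV :: 'c set"] by simp
  have Pxy: "distributed (measure_pmf P) (count_space UNIV \<Otimes>\<^sub>M count_space UNIV) (\<lambda>\<omega>. (X \<omega>, Y \<omega>)) (\<lambda>z. ennreal (pmf ?J z))"
    unfolding pm by (rule distributed_pmf)
  have "MI P X Y = integral\<^sup>L (count_space UNIV \<Otimes>\<^sub>M count_space UNIV)
      (\<lambda>z. pmf ?J z * log 2 (pmf ?J z / (pmf (map_pmf X P) (fst z) * pmf (map_pmf Y P) (snd z))))"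
    unfolding MI_def
    by (rule mutual_information_distr[OF sf1 sf2 distributed_pmf _ distributed_pmf _ Pxy]) auto
  also have "\<dots> = integral\<^sup>L (count_space UNIV)
      (\<lambda>z. pmf ?J z * log 2 (pmf ?J z / (pmf (map_pmf X P) (fst z) * pmf (map_pmf Y P) (snd z))))"
    unfolding pm ..
  also have "\<dots> = integral\<^sup>L (density (count_space UNIV) (\<lambda>z. ennreal (pmf ?J z)))
      (\<lambda>z. log 2 (pmf ?J z / (pmf (map_pmf X P) (fst z) * pmf (map_pmf Y P) (snd z))))"
    by (rule integral_real_density[symmetric]) auto
  also have "\<dots> = (\<integral>z. log 2 (pmf ?J z / (pmf (map_pmf X P) (fst z) * pmf (map_pmf Y P) (snd z))) \<partial>measure_pmf ?J)"
    unfolding measure_pmf_eq_density[symmetric] ..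
  finally show ?thesis .
qed

lemma MI_inj:
  fixes X :: "'a \<Rightarrow> 'b::countable" and Y :: "'a \<Rightarrow> 'c::countable" and g :: "'c \<Rightarrow> 'd::countable"
  assumes gi: "inj g"
  shows "MI P X (\<lambda>\<omega>. g (Y \<omega>)) = MI P X Y"
proof -
  let ?J = "map_pmf (\<lambda>\<omega>. (X \<omega>, Y \<omega>)) P"
  define phi where "phi = (\<lambda>(x::'b, y::'c). (x, g y))"
  have phii: "inj phi" unfolding phi_def using gi by (auto simp: inj_def)
  have J': "map_pmf (\<lambda>\<omega>. (X \<omega>, g (Y \<omega>))) P = map_pmf phi ?J" by (simp add: map_pmf_comp phi_def)
  have Yg: "map_pmf (\<lambda>\<omega>. g (Y \<omega>)) P = map_pmf g (map_pmf Y P)" by (simp add: map_pmf_comp)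
  have "MI P X (\<lambda>\<omega>. g (Y \<omega>)) = (\<integral>z. log 2 (pmf (map_pmf phi ?J) (phi z) / (pmf (map_pmf X P) (fst (phi z)) * pmf (map_pmf g (map_pmf Y P)) (snd (phi z)))) \<partial>measure_pmf ?J)"
    unfolding MI_pmf J' Yg by simp
  also have "\<dots> = (\<integral>z. log 2 (pmf ?J z / (pmf (map_pmf X P) (fst z) * pmf (map_pmf Y P) (snd z))) \<partial>measure_pmf ?J)"
  proof -
    have fp: "fst (phi z) = fst z" "snd (phi z) = g (snd z)" for z unfolding phi_def by (simp_all add: case_prod_unfold)
    show ?thesis by (simp only: pmf_map_inj'[OF phii] pmf_map_inj'[OF gi] fp)
  qed
  also have "\<dots> = MI P X Y" unfolding MI_pmf ..
  finally show ?thesis .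
qed

lemma MI_cong:
  fixes X :: "'a \<Rightarrow> 'b::countable" and Y Y' :: "'a \<Rightarrow> 'c::countable"
  assumes "\<And>\<omega>. \<omega> \<in> set_pmf P \<Longrightarrow> Y \<omega> = Y' \<omega>"
  shows "MI P X Y = MI P X Y'"
proof -
  have joint: "map_pmf (\<lambda>\<omega>. (X \<omega>, Y \<omega>)) P = map_pmf (\<lambda>\<omega>. (X \<omega>, Y' \<omega>)) P"
    by (rule map_pmf_cong) (auto simp: assms)
  have marginal: "map_pmf Y P = map_pmf Y' P" by (rule map_pmf_cong) (auto simp: assms)
  show ?thesis unfolding MI_pmf joint marginal ..
qed

lemma MI_indep_integral:
  fixes X :: "'a \<Rightarrow> 'b::countable" and Y :: "'a \<Rightarrow> 'c::countable" and T :: "'a \<Rightarrow> 'd::countable"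
  assumes J: "map_pmf (\<lambda>\<omega>. ((X \<omega>, Y \<omega>), T \<omega>)) P = pair_pmf K PT"
  shows "MI P X (\<lambda>\<omega>. (Y \<omega>, T \<omega>))
       = (\<integral>v. log 2 (pmf K v) - log 2 (pmf (map_pmf fst K) (fst v)) - log 2 (pmf (map_pmf snd K) (snd v)) \<partial>measure_pmf K)"
proof -
  let ?J = "map_pmf (\<lambda>\<omega>. (X \<omega>, (Y \<omega>, T \<omega>))) P"
  define g where "g = (\<lambda>((x::'b,y::'c),t::'d). (x,(y,t)))"
  have gi: "inj g" unfolding g_def by (auto simp: inj_def)
  have J2: "?J = map_pmf g (pair_pmf K PT)" unfolding J[symmetric] by (simp add: map_pmf_comp g_def)
  have mX: "map_pmf X P = map_pmf fst K"
  proof -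
    have "map_pmf X P = map_pmf (\<lambda>z. fst (fst z)) (map_pmf (\<lambda>\<omega>. ((X \<omega>, Y \<omega>), T \<omega>)) P)" by (simp add: map_pmf_comp)
    also have "\<dots> = map_pmf fst (map_pmf fst (pair_pmf K PT))" unfolding J by (simp add: map_pmf_comp)
    finally show ?thesis by (simp only: map_fst_pair_pmf)
  qed
  have mYT: "map_pmf (\<lambda>\<omega>. (Y \<omega>, T \<omega>)) P = pair_pmf (map_pmf snd K) PT"
  proof -
    have "map_pmf (\<lambda>\<omega>. (Y \<omega>, T \<omega>)) P = map_pmf (\<lambda>(a, b). (snd a, id b)) (map_pmf (\<lambda>\<omega>. ((X \<omega>, Y \<omega>), T \<omega>)) P)"
      by (simp add: map_pmf_comp)
    also have "\<dots> = pair_pmf (map_pmf snd K) (map_pmf id PT)" unfolding J by (rule map_pair)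
    finally show ?thesis by simp
  qed
  have "MI P X (\<lambda>\<omega>. (Y \<omega>, T \<omega>)) = (\<integral>z. log 2 (pmf ?J z / (pmf (map_pmf fst K) (fst z) * pmf (pair_pmf (map_pmf snd K) PT) (snd z))) \<partial>measure_pmf ?J)"
    unfolding MI_pmf mX mYT ..
  also have "\<dots> = (\<integral>u. log 2 (pmf ?J (g u) / (pmf (map_pmf fst K) (fst (g u)) * pmf (pair_pmf (map_pmf snd K) PT) (snd (g u)))) \<partial>measure_pmf (pair_pmf K PT))"
    unfolding J2 by simp
  also have "\<dots> = (\<integral>u. log 2 (pmf K (fst u)) - log 2 (pmf (map_pmf fst K) (fst (fst u))) - log 2 (pmf (map_pmf snd K) (snd (fst u))) \<partial>measure_pmf (pair_pmf K PT))"
  proof (rule integral_cong_AE)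
    show "AE u in measure_pmf (pair_pmf K PT). log 2 (pmf ?J (g u) / (pmf (map_pmf fst K) (fst (g u)) * pmf (pair_pmf (map_pmf snd K) PT) (snd (g u))))
       = log 2 (pmf K (fst u)) - log 2 (pmf (map_pmf fst K) (fst (fst u))) - log 2 (pmf (map_pmf snd K) (snd (fst u)))"
    proof (rule AE_pmfI)
      fix u assume u: "u \<in> set_pmf (pair_pmf K PT)"
      obtain x y t where uu: "u = ((x,y),t)" by (cases u) auto
      have k: "(x,y) \<in> set_pmf K" and tt: "t \<in> set_pmf PT" using u uu by auto
      have pk: "pmf K (x,y) > 0" using pmf_positive[OF k] .
      have pt: "pmf PT t > 0" using pmf_positive[OF tt] .
      have p1: "pmf (map_pmf fst K) x > 0" by (rule pmf_positive) (use k in force)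
      have p2: "pmf (map_pmf snd K) y > 0" by (rule pmf_positive) (use k in force)
      have "pmf ?J (g u) = pmf K (x,y) * pmf PT t"
        unfolding J2 pmf_map_inj'[OF gi] uu by (simp add: pmf_pair)
      then show "log 2 (pmf ?J (g u) / (pmf (map_pmf fst K) (fst (g u)) * pmf (pair_pmf (map_pmf snd K) PT) (snd (g u))))
       = log 2 (pmf K (fst u)) - log 2 (pmf (map_pmf fst K) (fst (fst u))) - log 2 (pmf (map_pmf snd K) (snd (fst u)))"
        using pk pt p1 p2 by (simp add: uu g_def pmf_pair log_divide log_mult)
    qed
  qed auto
  also have "\<dots> = (\<integral>v. log 2 (pmf K v) - log 2 (pmf (map_pmf fst K) (fst v)) - log 2 (pmf (map_pmf snd K) (snd v)) \<partial>measure_pmf K)"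
  proof -
    have "(\<integral>v. log 2 (pmf K v) - log 2 (pmf (map_pmf fst K) (fst v)) - log 2 (pmf (map_pmf snd K) (snd v)) \<partial>measure_pmf (map_pmf fst (pair_pmf K PT)))
      = (\<integral>u. log 2 (pmf K (fst u)) - log 2 (pmf (map_pmf fst K) (fst (fst u))) - log 2 (pmf (map_pmf snd K) (snd (fst u))) \<partial>measure_pmf (pair_pmf K PT))"
      by (rule integral_map_pmf)
    then show ?thesis by (simp only: map_fst_pair_pmf)
  qed
  finally show ?thesis .
qed

lemma MI_indep:
  fixes X :: "'a \<Rightarrow> 'b::countable" and Y :: "'a \<Rightarrow> 'c::countable" and T :: "'a \<Rightarrow> 'd::countable"
  assumes J: "map_pmf (\<lambda>\<omega>. ((X \<omega>, Y \<omega>), T \<omega>)) P = pair_pmf K PT"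
    and fK: "finite (set_pmf K)"
  shows "MI P X (\<lambda>\<omega>. (Y \<omega>, T \<omega>)) = pmf_entropy (map_pmf fst K) + pmf_entropy (map_pmf snd K) - pmf_entropy K"
proof -
  have "MI P X (\<lambda>\<omega>. (Y \<omega>, T \<omega>))
      = (\<integral>v. log 2 (pmf K v) \<partial>measure_pmf K) - (\<integral>v. log 2 (pmf (map_pmf fst K) (fst v)) \<partial>measure_pmf K)
       - (\<integral>v. log 2 (pmf (map_pmf snd K) (snd v)) \<partial>measure_pmf K)"
    unfolding MI_indep_integral[OF J] using fK by (simp add: integrable_measure_pmf_finite)
  also have "\<dots> = pmf_entropy (map_pmf fst K) + pmf_entropy (map_pmf snd K) - pmf_entropy K"
    using pmf_entropy_integral[OF fK] pmf_entropy_integral[of "map_pmf fst K"]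
      pmf_entropy_integral[of "map_pmf snd K"] fK by simp
  finally show ?thesis .
qed


section \<open>The channel under honest acknowledgments\<close>

definition erasure_pmf :: "real \<Rightarrow> real \<Rightarrow> state pmf" where
  "erasure_pmf d1 d2 = pair_pmf (bernoulli_pmf (1-d1)) (bernoulli_pmf (1-d2))"

text \<open>With honest acknowledgments the reported state equals the true one, so a run
  is a sequence of independent erasure patterns together with the packets that
  the encoder computes from the past states.\<close>
fun honest_run :: "real \<Rightarrow> real \<Rightarrow> encoder \<Rightarrow> nat \<Rightarrow> nat \<Rightarrow> nat \<Rightarrow> nat \<Rightarrow> slot list pmf" where
  "honest_run d1 d2 f w1 w2 tA 0 = return_pmf []"
| "honest_run d1 d2 f w1 w2 tA (Suc i) = honest_run d1 d2 f w1 w2 tA i \<bind>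
     (\<lambda>h. map_pmf (\<lambda>e. h @ [(e, e, f i w1 w2 tA (map rep_state h))]) (erasure_pmf d1 d2))"

lemma received_iff: "(\<exists>y. (if b then Some x else None) = Some y) \<longleftrightarrow> b"
  by auto

lemma step_honest:
  "step d1 d2 f w1 w2 tA tB tC honest_ack honest_ack i
   = (\<lambda>h. map_pmf (\<lambda>e. h @ [(e, e, f i w1 w2 tA (map rep_state h))]) (erasure_pmf d1 d2))"
  unfolding step_def[abs_def] honest_ack_def erasure_pmf_def pair_pmf_def
  by (simp add: map_bind_pmf bind_return_pmf map_return_pmf Let_def received_iff)

lemma run_honest:
  "run d1 d2 f w1 w2 tA tB tC honest_ack honest_ack n = honest_run d1 d2 f w1 w2 tA n"
  by (induction n) (simp_all add: step_honest)

lemma set_honest_run: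
  assumes fb: "\<And>i w1 w2 t s. f i w1 w2 t s < B"
  shows "h \<in> set_pmf (honest_run d1 d2 f w1 w2 tA n) \<Longrightarrow>
     length h = n \<and> (\<forall>s\<in>set h. fst (snd s) = fst s \<and> snd (snd s) < B)"
proof (induction n arbitrary: h)
  case 0
  then show ?case by simp
next
  case (Suc n)
  from Suc.prems obtain x e where x: "x \<in> set_pmf (honest_run d1 d2 f w1 w2 tA n)"
    and h: "h = x @ [(e, e, f n w1 w2 tA (map rep_state x))]" by (auto simp: set_bind_pmf)
  have ih: "length x = n \<and> (\<forall>s\<in>set x. fst (snd s) = fst s \<and> snd (snd s) < B)" by (rule Suc.IH[OF x])
  show ?case unfolding h using ih fb by simp
qed

lemma length_honest_run: "h \<in> set_pmf (honest_run d1 d2 f w1 w2 tA n) \<Longrightarrow> length h = n"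
  by (induction n arbitrary: h) (auto simp: set_bind_pmf)

lemma honest_run_prefix:
  "m \<le> n \<Longrightarrow> map_pmf (take m) (honest_run d1 d2 f w1 w2 tA n) = honest_run d1 d2 f w1 w2 tA m"
proof (induction n arbitrary: m)
  case 0
  then show ?case by simp
next
  case (Suc n)
  let ?R = "honest_run d1 d2 f w1 w2 tA"
  show ?case
  proof (cases "m = Suc n")
    case True
    have "map_pmf (take m) (?R (Suc n)) = map_pmf id (?R (Suc n))"
    proof (rule map_pmf_cong[OF refl])
      fix h assume "h \<in> set_pmf (?R (Suc n))"
      then have "length h = Suc n" by (rule length_honest_run)
      then show "take m h = id h" using True by simp
    qed
    then show ?thesis using True by simp
  next
    case False
    then have mn: "m \<le> n" using Suc.prems by simp
    have "map_pmf (take m) (?R (Suc n)) = ?R n \<bind> (\<lambda>h. return_pmf (take m h))"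
      unfolding honest_run.simps map_bind_pmf
    proof (rule bind_pmf_cong[OF refl])
      fix h assume h: "h \<in> set_pmf (?R n)"
      have "length h = n" using h by (rule length_honest_run)
      then show "map_pmf (take m) (map_pmf (\<lambda>e. h @ [(e, e, f n w1 w2 tA (map rep_state h))]) (erasure_pmf d1 d2))
          = return_pmf (take m h)" using mn by (simp add: map_pmf_comp)
    qed
    also have "\<dots> = map_pmf (take m) (?R n)" by (simp add: map_pmf_def)
    also have "\<dots> = ?R m" using Suc.IH[OF mn] .
    finally show ?thesis .
  qed
qed

lemma honest_run_slot:
  assumes i: "i < n"
  shows "map_pmf (\<lambda>h. (take i h, h ! i)) (honest_run d1 d2 f w1 w2 tA n)
       = honest_run d1 d2 f w1 w2 tA i \<bind> (\<lambda>h. map_pmf (\<lambda>e. (h, (e, e, f i w1 w2 tA (map rep_state h)))) (erasure_pmf d1 d2))"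
proof -
  let ?R = "honest_run d1 d2 f w1 w2 tA"
  have "map_pmf (\<lambda>h. (take i h, h ! i)) (?R n) = map_pmf (\<lambda>h'. (butlast h', last h')) (map_pmf (take (Suc i)) (?R n))"
    unfolding map_pmf_comp
  proof (rule map_pmf_cong[OF refl])
    fix h assume "h \<in> set_pmf (?R n)"
    then have "length h = n" by (rule length_honest_run)
    then have "take (Suc i) h = take i h @ [h ! i]" using i by (simp add: take_Suc_conv_app_nth)
    then show "(take i h, h ! i) = (butlast (take (Suc i) h), last (take (Suc i) h))" by simp
  qed
  also have "map_pmf (take (Suc i)) (?R n) = ?R (Suc i)" using i by (intro honest_run_prefix) simp
  also have "map_pmf (\<lambda>h'. (butlast h', last h')) (?R (Suc i))
     = ?R i \<bind> (\<lambda>h. map_pmf (\<lambda>e. (h, (e, e, f i w1 w2 tA (map rep_state h)))) (erasure_pmf d1 d2))"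
    by (simp add: map_bind_pmf map_pmf_comp)
  finally show ?thesis .
qed

lemma pair_bind_pmf: "pair_pmf (bind_pmf C F) E = bind_pmf C (\<lambda>c. pair_pmf (F c) E)"
  unfolding pair_pmf_def by (simp add: bind_assoc_pmf)

lemma bind_return_pair:
  "C \<bind> (\<lambda>c. R \<bind> (\<lambda>h. return_pmf (g h, c))) = pair_pmf (map_pmf g R) C"
proof -
  have "pair_pmf (map_pmf g R) C = R \<bind> (\<lambda>h. C \<bind> (\<lambda>c. return_pmf (g h, c)))"
    unfolding pair_pmf_def by (simp add: bind_map_pmf)
  also have "\<dots> = C \<bind> (\<lambda>c. R \<bind> (\<lambda>h. return_pmf (g h, c)))" by (rule bind_commute_pmf)
  finally show ?thesis by simp
qed

definition inputs_pmf :: "nat pmf \<Rightarrow> nat pmf \<Rightarrow> nat pmf \<Rightarrow> (nat \<times> nat \<times> nat) pmf" where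
  "inputs_pmf PW1 PW2 PA = PW1 \<bind> (\<lambda>w1. PW2 \<bind> (\<lambda>w2. map_pmf (\<lambda>t. (w1, w2, t)) PA))"

definition honest_joint :: "real \<Rightarrow> real \<Rightarrow> nat \<Rightarrow> encoder \<Rightarrow> nat pmf \<Rightarrow> nat pmf \<Rightarrow> nat pmf \<Rightarrow> (nat \<times> nat \<times> slot list) pmf" where
  "honest_joint d1 d2 n f PA PW1 PW2 = inputs_pmf PW1 PW2 PA \<bind> (\<lambda>(w1,w2,tA). map_pmf (\<lambda>h. (w1,w2,h)) (honest_run d1 d2 f w1 w2 tA n))"

lemma honest_exp_calvin:
  "map_pmf (\<lambda>\<omega>. ((W1_of \<omega>, W2_of \<omega>, hist_of \<omega>), thC_of \<omega>)) (channel_exp d1 d2 n f PA PB PC PW1 PW2 honest_ack honest_ack)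
   = pair_pmf (honest_joint d1 d2 n f PA PW1 PW2) PC"
  unfolding channel_exp_def run_honest honest_joint_def inputs_pmf_def
  by (simp add: map_bind_pmf bind_assoc_pmf bind_return_pmf pair_bind_pmf bind_map_pmf map_pmf_comp bind_return_pair
     W1_of_def W2_of_def hist_of_def thC_of_def)

lemma honest_exp_bob:
  "map_pmf (\<lambda>\<omega>. ((W1_of \<omega>, W2_of \<omega>, hist_of \<omega>), thB_of \<omega>)) (channel_exp d1 d2 n f PA PB PC PW1 PW2 honest_ack honest_ack)
   = pair_pmf (honest_joint d1 d2 n f PA PW1 PW2) PB"
  unfolding channel_exp_def run_honest honest_joint_def inputs_pmf_def
  by (simp add: map_bind_pmf bind_assoc_pmf bind_return_pmf pair_bind_pmf bind_map_pmf map_pmf_comp bind_return_pair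
     W1_of_def W2_of_def hist_of_def thB_of_def)

lemma honest_exp:
  "map_pmf (\<lambda>\<omega>. (W1_of \<omega>, W2_of \<omega>, hist_of \<omega>)) (channel_exp d1 d2 n f PA PB PC PW1 PW2 honest_ack honest_ack)
   = honest_joint d1 d2 n f PA PW1 PW2"
proof -
  have "map_pmf fst (map_pmf (\<lambda>\<omega>. ((W1_of \<omega>, W2_of \<omega>, hist_of \<omega>), thC_of \<omega>)) (channel_exp d1 d2 n f PA PB PC PW1 PW2 honest_ack honest_ack))
    = honest_joint d1 d2 n f PA PW1 PW2" unfolding honest_exp_calvin by (rule map_fst_pair_pmf)
  then show ?thesis by (simp add: map_pmf_comp)
qed

lemma set_honest_joint:
  assumes fb: "\<forall>i w1 w2 t s. f i w1 w2 t s < B"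
    and h: "(w1, w2, h) \<in> set_pmf (honest_joint d1 d2 n f PA PW1 PW2)"
  shows "w1 \<in> set_pmf PW1 \<and> w2 \<in> set_pmf PW2 \<and> length h = n \<and> (\<forall>s\<in>set h. fst (snd s) = fst s \<and> snd (snd s) < B)"
proof -
  from h obtain tA where "w1 \<in> set_pmf PW1" "w2 \<in> set_pmf PW2" "h \<in> set_pmf (honest_run d1 d2 f w1 w2 tA n)"
    unfolding honest_joint_def inputs_pmf_def by (auto simp: set_bind_pmf)
  then show ?thesis using set_honest_run[of f B] fb by blast
qed

lemma honest_joint_messages: "map_pmf (\<lambda>(w1,w2,h). (w1,w2)) (honest_joint d1 d2 n f PA PW1 PW2) = pair_pmf PW1 PW2"
  unfolding honest_joint_def inputs_pmf_def pair_pmf_def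
  by (simp add: map_bind_pmf bind_assoc_pmf bind_return_pmf map_pmf_comp bind_map_pmf case_prod_unfold map_pmf_def)

text \<open>The per-slot independence used in the entropy bookkeeping: the state of slot
  \<open>i\<close> is independent of the messages, the first \<open>i\<close> slots and the \<open>i\<close>-th packet.\<close>
lemma honest_joint_slot:
  assumes i: "i < n"
  shows "map_pmf (\<lambda>(w1,w2,h). (((w1,w2), take i h, snd (snd (h!i))), fst (h!i))) (honest_joint d1 d2 n f PA PW1 PW2)
   = pair_pmf (map_pmf (\<lambda>(w1,w2,h). ((w1,w2), take i h, snd (snd (h!i)))) (honest_joint d1 d2 n f PA PW1 PW2)) (erasure_pmf d1 d2)"
proof -
  have L: "map_pmf (\<lambda>(w1',w2',h). (((w1',w2'), take i h, snd (snd (h!i))), fst (h!i))) (map_pmf (\<lambda>h. (w1,w2,h)) (honest_run d1 d2 f w1 w2 tA n))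
     = honest_run d1 d2 f w1 w2 tA i \<bind> (\<lambda>h. map_pmf (\<lambda>e. (((w1,w2),h, f i w1 w2 tA (map rep_state h)), e)) (erasure_pmf d1 d2))"
    for w1 w2 tA
  proof -
    have "map_pmf (\<lambda>(w1',w2',h). (((w1',w2'), take i h, snd (snd (h!i))), fst (h!i))) (map_pmf (\<lambda>h. (w1,w2,h)) (honest_run d1 d2 f w1 w2 tA n))
      = map_pmf (\<lambda>(h0,s). (((w1,w2),h0, snd (snd s)), fst s)) (map_pmf (\<lambda>h. (take i h, h ! i)) (honest_run d1 d2 f w1 w2 tA n))"
      by (simp add: map_pmf_comp)
    also have "\<dots> = honest_run d1 d2 f w1 w2 tA i \<bind> (\<lambda>h. map_pmf (\<lambda>e. (((w1,w2),h, f i w1 w2 tA (map rep_state h)), e)) (erasure_pmf d1 d2))"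
      unfolding honest_run_slot[OF i] by (simp add: map_bind_pmf map_pmf_comp)
    finally show ?thesis .
  qed
  have R: "pair_pmf (map_pmf (\<lambda>(w1',w2',h). ((w1',w2'), take i h, snd (snd (h!i)))) (map_pmf (\<lambda>h. (w1,w2,h)) (honest_run d1 d2 f w1 w2 tA n))) (erasure_pmf d1 d2)
     = honest_run d1 d2 f w1 w2 tA i \<bind> (\<lambda>h. map_pmf (\<lambda>e. (((w1,w2),h, f i w1 w2 tA (map rep_state h)), e)) (erasure_pmf d1 d2))"
    for w1 w2 tA
  proof -
    have "map_pmf (\<lambda>(w1',w2',h). ((w1',w2'), take i h, snd (snd (h!i)))) (map_pmf (\<lambda>h. (w1,w2,h)) (honest_run d1 d2 f w1 w2 tA n))
      = map_pmf (\<lambda>(h0,s). ((w1,w2),h0, snd (snd s))) (map_pmf (\<lambda>h. (take i h, h ! i)) (honest_run d1 d2 f w1 w2 tA n))"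
      by (simp add: map_pmf_comp)
    also have "\<dots> = honest_run d1 d2 f w1 w2 tA i \<bind> (\<lambda>h. return_pmf ((w1,w2),h, f i w1 w2 tA (map rep_state h)))"
      unfolding honest_run_slot[OF i] by (simp add: map_bind_pmf map_pmf_comp)
    finally show ?thesis by (simp add: pair_bind_pmf pair_return_pmf1)
  qed
  show ?thesis unfolding honest_joint_def map_bind_pmf pair_bind_pmf
    by (intro bind_pmf_cong refl) (auto simp: L R split: prod.splits)
qed

lemma honest_reported_states:
  assumes fb: "\<forall>i w1 w2 t s. f i w1 w2 t s < B"
    and w: "\<omega> \<in> set_pmf (channel_exp d1 d2 n f PA PB PC PW1 PW2 honest_ack honest_ack)"
  shows "Sstar_of \<omega> = S_of \<omega>"
proof -
  have "(W1_of \<omega>, W2_of \<omega>, hist_of \<omega>) \<in> set_pmf (map_pmf (\<lambda>\<omega>. (W1_of \<omega>, W2_of \<omega>, hist_of \<omega>)) (channel_exp d1 d2 n f PA PB PC PW1 PW2 honest_ack honest_ack))"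
    using w by simp
  then have "(W1_of \<omega>, W2_of \<omega>, hist_of \<omega>) \<in> set_pmf (honest_joint d1 d2 n f PA PW1 PW2)"
    unfolding honest_exp .
  then have "\<forall>s\<in>set (hist_of \<omega>). fst (snd s) = fst s" using set_honest_joint[OF fb] by blast
  then show ?thesis unfolding Sstar_of_def S_of_def rep_state_def true_state_def by simp
qed

lemma channel_exp_bind:
  "channel_exp d1 d2 n f PA PB PC PW1 PW2 aB aC
   = PW1 \<bind> (\<lambda>w1. PW2 \<bind> (\<lambda>w2. channel_exp d1 d2 n f PA PB PC (return_pmf w1) (return_pmf w2) aB aC))"
  unfolding channel_exp_def by (simp add: bind_return_pmf)

lemma error_prob_uniform_le:
  assumes M1: "finite M1" "M1 \<noteq> {}" and M2: "finite M2" "M2 \<noteq> {}"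
    and each: "\<And>w1 w2. w1 \<in> M1 \<Longrightarrow> w2 \<in> M2 \<Longrightarrow>
       measure_pmf.prob (channel_exp d1 d2 n f PA PB PC (return_pmf w1) (return_pmf w2) aB aC) A < eps"
  shows "measure_pmf.prob (channel_exp d1 d2 n f PA PB PC (pmf_of_set M1) (pmf_of_set M2) aB aC) A \<le> eps"
proof -
  have "measure_pmf.prob (channel_exp d1 d2 n f PA PB PC (pmf_of_set M1) (pmf_of_set M2) aB aC) A
     = (\<integral>w1. (\<integral>w2. measure_pmf.prob (channel_exp d1 d2 n f PA PB PC (return_pmf w1) (return_pmf w2) aB aC) A
           \<partial>measure_pmf (pmf_of_set M2)) \<partial>measure_pmf (pmf_of_set M1))"
  proof -
    have m: "\<And>D. measure_pmf.prob D A = pmf (map_pmf (\<lambda>\<omega>. \<omega> \<in> A) D) True"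
      by (simp add: pmf_map vimage_def)
    show ?thesis unfolding m by (subst channel_exp_bind) (simp add: map_bind_pmf pmf_bind)
  qed
  also have "\<dots> \<le> eps"
    using M1 M2 each[THEN less_imp_le]
    by (intro measure_pmf.integral_le_const integrable_measure_pmf_finite AE_pmfI) auto
  finally show ?thesis .
qed

section \<open>Entropy of one slot of an erasure broadcast\<close>

text \<open>What a receiver listening in the states satisfying \<open>c\<close> observes in a slot:
  the packet if \<open>c\<close> holds for the slot's state, an erasure otherwise.  Bob
  listens in \<open>fst\<close>, Calvin in \<open>snd\<close>, and the union of both in \<open>someone\<close>.\<close>
definition observe :: "(state \<Rightarrow> bool) \<Rightarrow> slot \<Rightarrow> obs" where
  "observe c s = (if c (fst s) then Some (snd (snd s)) else None)"

abbreviation someone :: "state \<Rightarrow> bool" where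
  "someone e \<equiv> fst e \<or> snd e"

text \<open>The observations of a receiver are a function of the observations of a
  better-placed receiver and the (public) states.\<close>
definition mask :: "(state \<Rightarrow> bool) \<Rightarrow> obs list \<times> state list \<Rightarrow> obs list" where
  "mask c p = map2 (\<lambda>y e. if c e then y else None) (fst p) (snd p)"

lemma mask_observe:
  assumes "\<And>e. c e \<Longrightarrow> c' e"
  shows "map (observe c) h = mask c (map (observe c') h, map fst h)"
  unfolding mask_def by (induction h) (auto simp: observe_def dest: assms)

lemma finite_erasure_pmf: "finite (set_pmf (erasure_pmf d1 d2))"
  by (rule finite_subset[OF subset_UNIV]) simp

lemma prob_bob_receives: "0 < d1 \<Longrightarrow> d1 < 1 \<Longrightarrow> measure_pmf.prob (erasure_pmf d1 d2) {e. fst e} = 1 - d1"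
proof -
  assume a: "0 < d1" "d1 < 1"
  have "{e::state. fst e} = {True} \<times> UNIV" by auto
  then show ?thesis unfolding erasure_pmf_def using a
    by (simp add: measure_pmf_prob_product measure_pmf_single)
qed

lemma prob_calvin_receives: "0 < d2 \<Longrightarrow> d2 < 1 \<Longrightarrow> measure_pmf.prob (erasure_pmf d1 d2) {e. snd e} = 1 - d2"
proof -
  assume a: "0 < d2" "d2 < 1"
  have "{e::state. snd e} = UNIV \<times> {True}" by auto
  then show ?thesis unfolding erasure_pmf_def using a
    by (simp add: measure_pmf_prob_product measure_pmf_single)
qed

lemma prob_someone_receives: "0 < d1 \<Longrightarrow> d1 < 1 \<Longrightarrow> 0 < d2 \<Longrightarrow> d2 < 1 \<Longrightarrow>
   measure_pmf.prob (erasure_pmf d1 d2) {e. fst e \<or> snd e} = 1 - d1 * d2"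
proof -
  assume a: "0 < d1" "d1 < 1" "0 < d2" "d2 < 1"
  have s: "{e::state. fst e \<or> snd e} = UNIV - {(False, False)}" by auto
  have "measure_pmf.prob (erasure_pmf d1 d2) (UNIV - {(False, False)}) = measure_pmf.prob (erasure_pmf d1 d2) UNIV - measure_pmf.prob (erasure_pmf d1 d2) {(False, False)}"
    by (rule measure_pmf.finite_measure_Diff) auto
  also have "\<dots> = 1 - d1 * d2" unfolding erasure_pmf_def measure_pmf_single using a by (simp add: pmf_pair)
  finally show ?thesis using s by simp
qed

lemma pair_pmf_labelled: "map_pmf (\<lambda>(z,e). (e, F e z)) (pair_pmf D E) = E \<bind> (\<lambda>e. map_pmf (\<lambda>z. (e, F e z)) D)"
proof -
  have "map_pmf (\<lambda>(z,e). (e, F e z)) (pair_pmf D E) = map_pmf (\<lambda>(e,z). (e, F e z)) (pair_pmf E D)"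
    by (subst pair_commute_pmf) (simp add: map_pmf_comp case_prod_unfold)
  also have "\<dots> = E \<bind> (\<lambda>e. map_pmf (\<lambda>z. (e, F e z)) D)"
    unfolding pair_pmf_def map_bind_pmf by (simp add: map_pmf_def bind_assoc_pmf bind_return_pmf)
  finally show ?thesis .
qed

lemma sum_pmf_if:
  assumes "finite (set_pmf E)"
  shows "(\<Sum>e\<in>set_pmf E. pmf E e * (if c e then a else b))
     = measure_pmf.prob E {e. c e} * a + (1 - measure_pmf.prob E {e. c e}) * b"
proof -
  have m: "measure_pmf.prob E {e. c e} = (\<Sum>e\<in>set_pmf E. pmf E e * (if e \<in> {e. c e} then 1 else 0))"
    using sum_pmf_indicator[OF assms, of "{e. c e}"] by simp
  have one: "(\<Sum>e\<in>set_pmf E. pmf E e) = 1" using assms by (simp add: sum_pmf_eq_1)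
  have "(\<Sum>e\<in>set_pmf E. pmf E e * (if c e then a else b))
     = (\<Sum>e\<in>set_pmf E. pmf E e * (if e \<in> {e. c e} then 1 else 0) * a + (pmf E e - pmf E e * (if e \<in> {e. c e} then 1 else 0)) * b)"
    by (intro sum.cong) auto
  also have "\<dots> = measure_pmf.prob E {e. c e} * a + (1 - measure_pmf.prob E {e. c e}) * b"
    unfolding m by (simp add: sum.distrib sum_distrib_right[symmetric] sum_subtractf one)
  finally show ?thesis .
qed

lemma pmf_entropy_erasure_step:
  fixes D0 :: "'z pmf" and E :: "state pmf" and A :: "'z \<Rightarrow> 'a" and X :: "'z \<Rightarrow> nat"
  assumes fD: "finite (set_pmf D0)" and fE: "finite (set_pmf E)"
  shows "pmf_entropy (map_pmf (\<lambda>(z,e). (A z, e, if c e then Some (X z) else None)) (pair_pmf D0 E))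
       = pmf_entropy E + pmf_entropy (map_pmf A D0)
         + measure_pmf.prob E {e. c e} * (pmf_entropy (map_pmf (\<lambda>z. (A z, X z)) D0) - pmf_entropy (map_pmf A D0))"
proof -
  define F where "F = (\<lambda>e z. (A z, if c e then Some (X z) else None))"
  define g where "g = (\<lambda>(e::state, (a::'a, y::obs)). (a, e, y))"
  have gi: "inj g" unfolding g_def by (auto simp: inj_def)
  have "map_pmf (\<lambda>(z,e). (A z, e, if c e then Some (X z) else None)) (pair_pmf D0 E)
      = map_pmf g (map_pmf (\<lambda>(z,e). (e, F e z)) (pair_pmf D0 E))"
    by (simp add: map_pmf_comp g_def F_def case_prod_unfold)
  then have "pmf_entropy (map_pmf (\<lambda>(z,e). (A z, e, if c e then Some (X z) else None)) (pair_pmf D0 E))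
      = pmf_entropy (map_pmf (\<lambda>(z,e). (e, F e z)) (pair_pmf D0 E))"
    using pmf_entropy_map_inj[of g "map_pmf (\<lambda>(z,e). (e, F e z)) (pair_pmf D0 E)"] gi inj_on_subset[OF gi] by simp
  also have "\<dots> = pmf_entropy E + (\<Sum>e\<in>set_pmf E. pmf E e * pmf_entropy (map_pmf (F e) D0))"
    unfolding pair_pmf_labelled by (rule pmf_entropy_labelled[OF fD fE])
  also have "(\<Sum>e\<in>set_pmf E. pmf E e * pmf_entropy (map_pmf (F e) D0))
      = (\<Sum>e\<in>set_pmf E. pmf E e * (if c e then pmf_entropy (map_pmf (\<lambda>z. (A z, X z)) D0) else pmf_entropy (map_pmf A D0)))"
  proof (intro sum.cong refl)
    fix e
    show "pmf E e * pmf_entropy (map_pmf (F e) D0) = pmf E e * (if c e then pmf_entropy (map_pmf (\<lambda>z. (A z, X z)) D0) else pmf_entropy (map_pmf A D0))"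
    proof (cases "c e")
      case True
      have "map_pmf (F e) D0 = map_pmf (\<lambda>(a,x). (a, Some x)) (map_pmf (\<lambda>z. (A z, X z)) D0)"
        using True by (simp add: F_def map_pmf_comp)
      moreover have "pmf_entropy \<dots> = pmf_entropy (map_pmf (\<lambda>z. (A z, X z)) D0)" by (rule pmf_entropy_map_inj) (auto simp: inj_on_def)
      ultimately show ?thesis using True by simp
    next
      case False
      have "map_pmf (F e) D0 = map_pmf (\<lambda>a. (a, None)) (map_pmf A D0)"
        using False by (simp add: F_def map_pmf_comp)
      moreover have "pmf_entropy \<dots> = pmf_entropy (map_pmf A D0)" by (rule pmf_entropy_map_inj) (auto simp: inj_on_def)
      ultimately show ?thesis using False by simp
    qed
  qed
  also have "\<dots> = measure_pmf.prob E {e. c e} * pmf_entropy (map_pmf (\<lambda>z. (A z, X z)) D0) + (1 - measure_pmf.prob E {e. c e}) * pmf_entropy (map_pmf A D0)"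
    by (rule sum_pmf_if[OF fE])
  finally show ?thesis by (simp add: algebra_simps)
qed

section \<open>The weights of the outer bound\<close>

text \<open>The bound for Bob's side reads \<open>w1 R1 + w2 R2 \<le> L log q\<close> with the weights
  below (Calvin's side is obtained by exchanging the roles).\<close>
definition rate_weight1 :: "real \<Rightarrow> real \<Rightarrow> real" where
  "rate_weight1 d1 d2 = 1 / (1 - d1) + 1 / (d2 * (1 - d1)) - 1 / (1 - d1 * d2)"

definition rate_weight2 :: "real \<Rightarrow> real \<Rightarrow> real" where
  "rate_weight2 d1 d2 = 1 / (1 - d1 * d2)"

lemma one_minus_product_pos: "0 < d1 \<Longrightarrow> d1 < 1 \<Longrightarrow> d2 < 1 \<Longrightarrow> 0 < 1 - d1 * (d2::real)"
  by (smt (verit) mult_less_cancel_left2)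

lemma rate_weight_difference:
  fixes d1 d2 :: real
  assumes "0 < d1" "d1 < 1" "0 < d2" "d2 < 1"
  shows "(1 - d2) / (d2 * (1 - d1) * (1 - d1 * d2)) = 1 / (d2 * (1 - d1)) - 1 / (1 - d1 * d2)"
proof -
  have pos: "0 < 1 - d1" "0 < 1 - d1 * d2" using assms one_minus_product_pos[of d1 d2] by simp_all
  have "1 / (d2 * (1 - d1)) - 1 / (1 - d1 * d2) = ((1 - d1 * d2) - d2 * (1 - d1)) / (d2 * (1 - d1) * (1 - d1 * d2))"
    using pos assms by (simp add: diff_frac_eq)
  also have "(1 - d1 * d2) - d2 * (1 - d1) = 1 - d2" by (simp add: algebra_simps)
  finally show ?thesis by simp
qed

lemma rate_weight_form:
  assumes "0 < d1" "d1 < 1" "0 < d2" "d2 < 1"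
  shows "R1 * (1 - d2) / (d2 * (1 - d1) * (1 - d1 * d2)) + R1 / (1 - d1) + R2 / (1 - d1 * d2)
       = rate_weight1 d1 d2 * R1 + rate_weight2 d1 d2 * R2"
proof -
  have "R1 * (1 - d2) / (d2 * (1 - d1) * (1 - d1 * d2)) = R1 * (1 / (d2 * (1 - d1)) - 1 / (1 - d1 * d2))"
    using rate_weight_difference[OF assms] by (metis times_divide_eq_right)
  then show ?thesis unfolding rate_weight1_def rate_weight2_def by (simp add: algebra_simps)
qed

text \<open>Both weights are at least one; this lets the limit absorb relative slack.\<close>
lemma rate_weights_ge_1:
  assumes d: "0 < d1" "d1 < 1" "0 < d2" "d2 < 1"
  shows "1 \<le> rate_weight1 d1 d2" "1 \<le> rate_weight2 d1 d2"
proof -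
  have po: "0 < 1 - d1 * d2" "1 - d1 * d2 \<le> 1" using one_minus_product_pos[of d1 d2] d by simp_all
  have k: "0 < d2 * (1 - d1)" "d2 * (1 - d1) \<le> 1 - d1 * d2" using d by (simp_all add: algebra_simps)
  have "1 / (1 - d1 * d2) \<le> 1 / (d2 * (1 - d1))" using k by (simp add: frac_le)
  moreover have "1 \<le> 1 / (1 - d1)" using d by simp
  ultimately show "1 \<le> rate_weight1 d1 d2" unfolding rate_weight1_def by simp
  show "1 \<le> rate_weight2 d1 d2" unfolding rate_weight2_def using po by simp
qed

text \<open>In terms of the packet-entropy sums
  \<open>S_c^U\<close> (\<open>c\<close>: who listens, \<open>U\<close>: which messages are known) the four entropy
  inequalities below -- Bob decodes, Calvin decodes, joint entropy, secrecy
  against Calvin -- together with the monotonicity of \<open>S\<close> in \<open>c\<close> and the packet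
  size bound \<open>N\<close> eliminate all \<open>S\<close> and leave the weighted rate bound.\<close>
lemma rate_combination:
  fixes T1 T2 F1 F2 e N S1e S1a Sa Sab Sb S2b :: real
  assumes d: "0 < d1" "d1 < 1" "0 < d2" "d2 < 1"
    and bob: "T1 + (1 - d1) * S1a - (1 - d1) * S1e \<le> F1"
    and calvin: "T2 + (1 - d1 * d2) * Sab - (1 - d1 * d2) * Sa \<le> F2"
    and joint: "(1 - d1 * d2) * Sb \<le> T1 + (1 - d1 * d2) * Sab"
    and secrecy: "T1 - e \<le> (1 - d1 * d2) * Sb - (1 - d2) * S2b"
    and mono1: "Sa \<le> S1a" and mono2: "Sb \<le> S2b" and cap: "S1e \<le> N"
  shows "rate_weight1 d1 d2 * T1 + rate_weight2 d1 d2 * T2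
       \<le> N + F1 / (1 - d1) + F2 / (1 - d1 * d2) + e / (d2 * (1 - d1))"
proof -
  define p1 where "p1 = 1 - d1"
  define po where "po = 1 - d1 * d2"
  define k where "k = d2 * (1 - d1)"
  have p1p: "p1 > 0" and pop: "po > 0" and kp: "k > 0"
    using d one_minus_product_pos[of d1 d2] unfolding p1_def po_def k_def by simp_all
  have "(1 - d2) * Sb \<le> (1 - d2) * S2b" using mono2 d by (simp add: mult_left_mono)
  then have "T1 - e \<le> k * Sb" using secrecy unfolding k_def by (simp add: algebra_simps)
  then have dd: "(T1 - e) / k \<le> Sb" using kp by (simp add: pos_divide_le_eq mult.commute)
  have "po * (Sb - Sab) \<le> T1" using joint unfolding po_def by (simp add: algebra_simps)
  then have "Sb - Sab \<le> T1 / po" using pop by (simp add: pos_le_divide_eq mult.commute)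
  then have cc: "Sb - T1 / po \<le> Sab" by simp
  have "T2 - F2 \<le> po * (Sa - Sab)" using calvin unfolding po_def by (simp add: algebra_simps)
  then have "(T2 - F2) / po \<le> Sa - Sab" using pop by (simp add: pos_divide_le_eq mult.commute)
  then have bb: "(T2 - F2) / po + Sab \<le> Sa" by simp
  have "p1 * Sa \<le> p1 * S1a" using mono1 p1p by (simp add: mult_left_mono)
  then have "T1 - F1 \<le> p1 * (S1e - Sa)" using bob unfolding p1_def by (simp add: algebra_simps)
  then have "(T1 - F1) / p1 \<le> S1e - Sa" using p1p by (simp add: pos_divide_le_eq mult.commute)
  then have aa: "(T1 - F1) / p1 + Sa \<le> S1e" by simp
  have "(T1 - F1) / p1 + (T2 - F2) / po + (T1 - e) / k - T1 / po \<le> N"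
    using aa bb cc dd cap by linarith
  then show ?thesis unfolding rate_weight1_def rate_weight2_def p1_def po_def k_def
    by (simp add: diff_divide_distrib add_divide_distrib algebra_simps)
qed

section \<open>The entropy inequalities of the converse\<close>

text \<open>Bob's message set is \<open>M1\<close>, Calvin's is \<open>M2\<close>.\<close>
locale honest_broadcast =
  fixes Q :: "(nat \<times> nat \<times> slot list) pmf" and d1 d2 :: real and n B :: nat and M1 M2 :: "nat set"
  assumes finQ: "finite (set_pmf Q)"
    and suppQ: "\<And>w1 w2 h. (w1,w2,h) \<in> set_pmf Q \<Longrightarrow> length h = n \<and> (\<forall>s\<in>set h. snd (snd s) < B)"
    and unif: "map_pmf (\<lambda>(w1,w2,h). (w1,w2)) Q = pair_pmf (pmf_of_set M1) (pmf_of_set M2)"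
    and M1: "finite M1" "M1 \<noteq> {}" and M2: "finite M2" "M2 \<noteq> {}"
    and slot: "\<And>i. i < n \<Longrightarrow> map_pmf (\<lambda>(w1,w2,h). (((w1,w2), take i h, snd (snd (h!i))), fst (h!i))) Q
        = pair_pmf (map_pmf (\<lambda>(w1,w2,h). ((w1,w2), take i h, snd (snd (h!i)))) Q) (erasure_pmf d1 d2)"
    and d: "0 < d1" "d1 < 1" "0 < d2" "d2 < 1"
begin

definition packet_entropy :: "(state \<Rightarrow> bool) \<Rightarrow> (nat \<times> nat \<Rightarrow> 'u) \<Rightarrow> nat \<Rightarrow> real" where
  "packet_entropy c U i = H Q (\<lambda>(w1,w2,h). ((U (w1,w2), map (observe c) (take i h), map fst (take i h)), snd (snd (h!i))))
     - H Q (\<lambda>(w1,w2,h). (U (w1,w2), map (observe c) (take i h), map fst (take i h)))"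

definition packet_sum :: "(state \<Rightarrow> bool) \<Rightarrow> (nat \<times> nat \<Rightarrow> 'u) \<Rightarrow> real" where
  "packet_sum c U = (\<Sum>i<n. packet_entropy c U i)"

lemma entropy_slot_step:
  fixes U :: "nat \<times> nat \<Rightarrow> 'u"
  assumes mn: "m < n"
  shows "H Q (\<lambda>(w1,w2,h). (U (w1,w2), map (observe c) (take (Suc m) h), map fst (take (Suc m) h)))
     = H Q (\<lambda>(w1,w2,h). (U (w1,w2), map (observe c) (take m h), map fst (take m h)))
       + pmf_entropy (erasure_pmf d1 d2) + measure_pmf.prob (erasure_pmf d1 d2) {e. c e} * packet_entropy c U m"
proof -
  define E where "E = erasure_pmf d1 d2"
  define D0 where "D0 = map_pmf (\<lambda>(w1,w2,h). ((w1,w2), take m h, snd (snd (h!m)))) Q"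
  define A where "A = (\<lambda>(w::nat\<times>nat, h0::slot list, x::nat). (U w, map (observe c) h0, map fst h0))"
  define X where "X = (\<lambda>(w::nat\<times>nat, h0::slot list, x::nat). x)"
  define append_slot where "append_slot = (\<lambda>((u::'u,y,s), e::state, ob::obs). (u, y @ [ob], s @ [e]))"
  have inj_append: "inj append_slot" unfolding append_slot_def by (auto simp: inj_def)
  have fD: "finite (set_pmf D0)" unfolding D0_def using finQ by simp
  have "H Q (\<lambda>(w1,w2,h). (U (w1,w2), map (observe c) (take (Suc m) h), map fst (take (Suc m) h)))
     = H Q (\<lambda>\<omega>. append_slot ((\<lambda>(z,e). (A z, e, if c e then Some (X z) else None))
            ((\<lambda>(w1,w2,h). (((w1,w2), take m h, snd (snd (h!m))), fst (h!m))) \<omega>)))"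
  proof (rule H_cong)
    fix \<omega> assume w: "\<omega> \<in> set_pmf Q"
    obtain w1 w2 h where om: "\<omega> = (w1,w2,h)" by (cases \<omega>) auto
    have "length h = n" using suppQ[of w1 w2 h] w om by simp
    then have "take (Suc m) h = take m h @ [h ! m]" using mn by (simp add: take_Suc_conv_app_nth)
    then show "(\<lambda>(w1,w2,h). (U (w1,w2), map (observe c) (take (Suc m) h), map fst (take (Suc m) h))) \<omega>
      = append_slot ((\<lambda>(z,e). (A z, e, if c e then Some (X z) else None))
            ((\<lambda>(w1,w2,h). (((w1,w2), take m h, snd (snd (h!m))), fst (h!m))) \<omega>))"
      unfolding om by (simp add: append_slot_def A_def X_def observe_def)
  qed
  also have "\<dots> = pmf_entropy (map_pmf append_slot (map_pmf (\<lambda>(z,e). (A z, e, if c e then Some (X z) else None)) (pair_pmf D0 E)))"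
    unfolding H_def E_def D0_def slot[OF mn, symmetric] by (simp add: map_pmf_comp)
  also have "\<dots> = pmf_entropy (map_pmf (\<lambda>(z,e). (A z, e, if c e then Some (X z) else None)) (pair_pmf D0 E))"
    by (rule pmf_entropy_map_inj) (use inj_append inj_on_subset in blast)
  also have "\<dots> = pmf_entropy E + pmf_entropy (map_pmf A D0)
      + measure_pmf.prob E {e. c e} * (pmf_entropy (map_pmf (\<lambda>z. (A z, X z)) D0) - pmf_entropy (map_pmf A D0))"
    by (rule pmf_entropy_erasure_step[OF fD]) (simp add: E_def finite_erasure_pmf)
  also have "pmf_entropy (map_pmf A D0) = H Q (\<lambda>(w1,w2,h). (U (w1,w2), map (observe c) (take m h), map fst (take m h)))"
    unfolding H_def D0_def A_def by (simp add: map_pmf_comp case_prod_unfold)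
  also have "pmf_entropy (map_pmf (\<lambda>z. (A z, X z)) D0)
      = H Q (\<lambda>(w1,w2,h). ((U (w1,w2), map (observe c) (take m h), map fst (take m h)), snd (snd (h!m))))"
    unfolding H_def D0_def A_def X_def by (simp add: map_pmf_comp case_prod_unfold)
  finally show ?thesis unfolding packet_entropy_def E_def by (simp add: algebra_simps)
qed

lemma entropy_observations:
  fixes U :: "nat \<times> nat \<Rightarrow> 'u"
  shows "H Q (\<lambda>(w1,w2,h). (U (w1,w2), map (observe c) h, map fst h))
     = H Q (\<lambda>(w1,w2,h). U (w1,w2)) + n * pmf_entropy (erasure_pmf d1 d2)
       + measure_pmf.prob (erasure_pmf d1 d2) {e. c e} * packet_sum c U"
proof -
  have prefix: "m \<le> n \<Longrightarrow> H Q (\<lambda>(w1,w2,h). (U (w1,w2), map (observe c) (take m h), map fst (take m h)))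
     = H Q (\<lambda>(w1,w2,h). U (w1,w2)) + m * pmf_entropy (erasure_pmf d1 d2)
       + measure_pmf.prob (erasure_pmf d1 d2) {e. c e} * (\<Sum>i<m. packet_entropy c U i)" for m
  proof (induction m)
    case 0
    have "H Q (\<lambda>(w1,w2,h). (U (w1,w2), map (observe c) (take 0 h), map fst (take 0 h)))
        = H Q (\<lambda>\<omega>. (\<lambda>u. (u, [] :: obs list, [] :: state list)) ((\<lambda>(w1,w2,h). U (w1,w2)) \<omega>))"
      by (simp add: case_prod_unfold)
    also have "\<dots> = H Q (\<lambda>(w1,w2,h). U (w1,w2))" by (rule H_inj) (auto simp: inj_def)
    finally show ?case by simp
  next
    case (Suc m)
    then show ?case using entropy_slot_step[of m U c] by (simp add: algebra_simps)
  qed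
  have "H Q (\<lambda>(w1,w2,h). (U (w1,w2), map (observe c) h, map fst h))
      = H Q (\<lambda>(w1,w2,h). (U (w1,w2), map (observe c) (take n h), map fst (take n h)))"
    by (rule H_cong) (use suppQ in auto)
  then show ?thesis unfolding packet_sum_def using prefix[of n] by simp
qed

lemma H_W1: "H Q (\<lambda>(w1,w2,h). w1) = log 2 (card M1)"
proof -
  have "map_pmf (\<lambda>(w1,w2,h). w1) Q = map_pmf fst (map_pmf (\<lambda>(w1,w2,h). (w1,w2)) Q)"
    by (simp add: map_pmf_comp case_prod_unfold)
  also have "\<dots> = pmf_of_set M1" unfolding unif by (rule map_fst_pair_pmf)
  finally show ?thesis unfolding H_def using pmf_entropy_uniform M1 by simp
qed

lemma H_W2: "H Q (\<lambda>(w1,w2,h). w2) = log 2 (card M2)"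
proof -
  have "map_pmf (\<lambda>(w1,w2,h). w2) Q = map_pmf snd (map_pmf (\<lambda>(w1,w2,h). (w1,w2)) Q)"
    by (simp add: map_pmf_comp case_prod_unfold)
  also have "\<dots> = pmf_of_set M2" unfolding unif by (rule map_snd_pair_pmf)
  finally show ?thesis unfolding H_def using pmf_entropy_uniform M2 by simp
qed

lemma H_W12: "H Q (\<lambda>(w1,w2,h). (w1,w2)) = log 2 (card M1) + log 2 (card M2)"
  unfolding H_def unif using pmf_entropy_pair[of "pmf_of_set M1" "pmf_of_set M2"] M1 M2
  by (simp add: pmf_entropy_uniform)

lemma packet_sum_someone_le:
  assumes "\<And>e. c e \<Longrightarrow> someone e"
  shows "packet_sum someone U \<le> packet_sum c U"
  unfolding packet_sum_def
proof (rule sum_mono)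
  fix i
  define Zo where "Zo = (\<lambda>(w1,w2,h). (U (w1,w2), map (observe someone) (take i h), map fst (take i h)))"
  define Zc where "Zc = (\<lambda>(w1,w2,h). (U (w1,w2), map (observe c) (take i h), map fst (take i h)))"
  define X where "X = (\<lambda>(w1::nat,w2::nat,h::slot list). snd (snd (h!i)))"
  have "H Q (\<lambda>\<omega>. (Zo \<omega>, X \<omega>)) - H Q Zo \<le> H Q (\<lambda>\<omega>. (Zc \<omega>, X \<omega>)) - H Q Zc"
  proof (rule cond_entropy_mono_left[OF finQ, where g="\<lambda>(u,y,s). (u, mask c (y,s), s)"])
    fix \<omega> assume "\<omega> \<in> set_pmf Q"
    show "Zc \<omega> = (\<lambda>(u,y,s). (u, mask c (y,s), s)) (Zo \<omega>)"
      unfolding Zc_def Zo_def using mask_observe[of c someone, OF assms] by (cases \<omega>) auto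
  qed
  then show "packet_entropy someone U i \<le> packet_entropy c U i"
    unfolding packet_entropy_def Zo_def Zc_def X_def by (simp add: case_prod_unfold)
qed

lemma packet_sum_le:
  assumes B: "B > 0"
  shows "packet_sum c U \<le> n * log 2 B"
proof -
  have "packet_entropy c U i \<le> log 2 B" if i: "i < n" for i
  proof -
    have "packet_entropy c U i \<le> H Q (\<lambda>(w1,w2,h). snd (snd (h!i)))"
      unfolding packet_entropy_def
      using cond_entropy_le[OF finQ, of "\<lambda>(w1,w2,h). snd (snd (h!i))"
          "\<lambda>(w1,w2,h). (U (w1,w2), map (observe c) (take i h), map fst (take i h))"]
        H_swap[of Q "\<lambda>(w1,w2,h). snd (snd (h!i))" "\<lambda>(w1,w2,h). (U (w1,w2), map (observe c) (take i h), map fst (take i h))"]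
      by (simp add: case_prod_unfold)
    also have "\<dots> \<le> log 2 (card {..<B})"
    proof (rule H_le_log_card)
      fix \<omega> assume w: "\<omega> \<in> set_pmf Q"
      obtain w1 w2 h where om: "\<omega> = (w1,w2,h)" by (cases \<omega>) auto
      have "length h = n" "\<forall>s\<in>set h. snd (snd s) < B" using suppQ[of w1 w2 h] w om by auto
      then show "(\<lambda>(w1,w2,h). snd (snd (h!i))) \<omega> \<in> {..<B}" using i om by auto
    qed simp
    finally show ?thesis by simp
  qed
  then have "packet_sum c U \<le> (\<Sum>i<n. log 2 B)" unfolding packet_sum_def by (intro sum_mono) simp
  then show ?thesis by simp
qed

lemma bob_decoding_sums:
  assumes F1: "H Q (\<lambda>(w1,w2,h). (w1, map (observe fst) h)) - H Q (\<lambda>(w1,w2,h). map (observe fst) h) \<le> F1"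
  shows "log 2 (card M1) + (1 - d1) * packet_sum fst (\<lambda>(w1,w2). w1) - (1 - d1) * packet_sum fst (\<lambda>w. ()) \<le> F1"
proof -
  have p1: "measure_pmf.prob (erasure_pmf d1 d2) {e. fst e} = 1 - d1" using prob_bob_receives d by simp
  have "H Q (\<lambda>(w1,w2,h). ((), map (observe fst) h, map fst h)) = H Q (\<lambda>(w1,w2,h). (map (observe fst) h, map fst h))"
    using H_inj[of "\<lambda>z. ((), z)" Q "\<lambda>(w1,w2,h). (map (observe fst) h, map fst h)"] by (simp add: inj_def case_prod_unfold)
  then have t1: "H Q (\<lambda>(w1,w2,h). (map (observe fst) h, map fst h))
      = n * pmf_entropy (erasure_pmf d1 d2) + (1 - d1) * packet_sum fst (\<lambda>w. ())"
    using entropy_observations[of "\<lambda>w. ()" fst] p1 by (simp add: case_prod_unfold)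
  have t2: "H Q (\<lambda>(w1,w2,h). (w1, map (observe fst) h, map fst h))
      = log 2 (card M1) + n * pmf_entropy (erasure_pmf d1 d2) + (1 - d1) * packet_sum fst (\<lambda>(w1,w2). w1)"
    using entropy_observations[of "\<lambda>(w1,w2). w1" fst] H_W1 p1 by simp
  have "H Q (\<lambda>\<omega>. ((\<lambda>(w1,w2,h). w1) \<omega>, (\<lambda>(w1,w2,h). (map (observe fst) h, map fst h)) \<omega>)) - H Q (\<lambda>(w1,w2,h). (map (observe fst) h, map fst h))
     \<le> H Q (\<lambda>\<omega>. ((\<lambda>(w1,w2,h). w1) \<omega>, (\<lambda>(w1,w2,h). map (observe fst) h) \<omega>)) - H Q (\<lambda>(w1,w2,h). map (observe fst) h)"
    by (rule cond_entropy_mono[OF finQ, where g=fst]) (auto simp: case_prod_unfold)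
  then show ?thesis using t1 t2 F1 by (simp add: case_prod_unfold)
qed

text \<open>Calvin decodes \<open>W2\<close>; a fortiori \<open>W2\<close> is almost determined by \<open>W1\<close> and
  what either receiver has seen.\<close>
lemma calvin_decoding_sums:
  assumes F2: "H Q (\<lambda>(w1,w2,h). (w2, map (observe snd) h)) - H Q (\<lambda>(w1,w2,h). map (observe snd) h) \<le> F2"
  shows "log 2 (card M2) + (1 - d1 * d2) * packet_sum someone (\<lambda>w. w)
           - (1 - d1 * d2) * packet_sum someone (\<lambda>(w1,w2). w1) \<le> F2"
proof -
  have po: "measure_pmf.prob (erasure_pmf d1 d2) {e. someone e} = 1 - d1 * d2" using prob_someone_receives d by simp
  have t3: "H Q (\<lambda>(w1,w2,h). (w1, map (observe someone) h, map fst h))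
      = log 2 (card M1) + n * pmf_entropy (erasure_pmf d1 d2) + (1 - d1 * d2) * packet_sum someone (\<lambda>(w1,w2). w1)"
    using entropy_observations[of "\<lambda>(w1,w2). w1" someone] H_W1 po by simp
  have t4: "H Q (\<lambda>(w1,w2,h). ((w1,w2), map (observe someone) h, map fst h))
      = log 2 (card M1) + log 2 (card M2) + n * pmf_entropy (erasure_pmf d1 d2) + (1 - d1 * d2) * packet_sum someone (\<lambda>w. w)"
    using entropy_observations[of "\<lambda>w. w" someone] H_W12 po by simp
  have "H Q (\<lambda>(w1,w2,h). ((w1,w2), map (observe someone) h, map fst h))
      = H Q (\<lambda>(w1,w2,h). (w2, w1, map (observe someone) h, map fst h))"
    using H_inj[of "\<lambda>(b,a,y,s). ((a,b),y,s)" Q "\<lambda>(w1,w2,h). (w2, w1, map (observe someone) h, map fst h)"]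
    by (simp add: inj_def case_prod_unfold)
  moreover have "H Q (\<lambda>\<omega>. ((\<lambda>(w1,w2,h). w2) \<omega>, (\<lambda>(w1,w2,h). (w1, map (observe someone) h, map fst h)) \<omega>))
        - H Q (\<lambda>(w1,w2,h). (w1, map (observe someone) h, map fst h))
     \<le> H Q (\<lambda>\<omega>. ((\<lambda>(w1,w2,h). w2) \<omega>, (\<lambda>(w1,w2,h). map (observe snd) h) \<omega>)) - H Q (\<lambda>(w1,w2,h). map (observe snd) h)"
    by (rule cond_entropy_mono[OF finQ, where g="\<lambda>(a,y,s). mask snd (y,s)"])
       (auto simp: case_prod_unfold intro: mask_observe)
  ultimately show ?thesis using t3 t4 F2 by (simp add: case_prod_unfold)
qed

lemma joint_sums:
  "(1 - d1 * d2) * packet_sum someone (\<lambda>(w1,w2). w2) \<le> log 2 (card M1) + (1 - d1 * d2) * packet_sum someone (\<lambda>w. w)"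
proof -
  have po: "measure_pmf.prob (erasure_pmf d1 d2) {e. someone e} = 1 - d1 * d2" using prob_someone_receives d by simp
  have "H Q (\<lambda>(w1,w2,h). (w2, map (observe someone) h, map fst h)) \<le> H Q (\<lambda>(w1,w2,h). ((w1,w2), map (observe someone) h, map fst h))"
    using H_map_le[OF finQ, of "\<lambda>((a,b),y,s). (b,y,s)" "\<lambda>(w1,w2,h). ((w1,w2), map (observe someone) h, map fst h)"]
    by (simp add: case_prod_unfold)
  then show ?thesis
    using entropy_observations[of "\<lambda>(w1,w2). w2" someone] entropy_observations[of "\<lambda>w. w" someone] H_W2 H_W12 po
    by simp
qed

text \<open>Combined with both decoding conditions this forces the packets to
  carry \<open>W1\<close> where Calvin cannot hear them.\<close>
lemma secrecy_sums:
  assumes F1: "H Q (\<lambda>(w1,w2,h). (w1, map (observe fst) h)) - H Q (\<lambda>(w1,w2,h). map (observe fst) h) \<le> F1"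
    and F2: "H Q (\<lambda>(w1,w2,h). (w2, map (observe snd) h)) - H Q (\<lambda>(w1,w2,h). map (observe snd) h) \<le> F2"
    and Lk: "log 2 (card M1) + H Q (\<lambda>(w1,w2,h). (map (observe snd) h, map fst h))
            - H Q (\<lambda>(w1,w2,h). (w1, map (observe snd) h, map fst h)) \<le> Lk"
  shows "log 2 (card M1) - (Lk + F1 + F2)
       \<le> (1 - d1 * d2) * packet_sum someone (\<lambda>(w1,w2). w2) - (1 - d2) * packet_sum snd (\<lambda>(w1,w2). w2)"
proof -
  have po: "measure_pmf.prob (erasure_pmf d1 d2) {e. someone e} = 1 - d1 * d2" using prob_someone_receives d by simp
  have p2: "measure_pmf.prob (erasure_pmf d1 d2) {e. snd e} = 1 - d2" using prob_calvin_receives d by simp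
  have t5: "H Q (\<lambda>(w1,w2,h). (w2, map (observe someone) h, map fst h))
      = log 2 (card M2) + n * pmf_entropy (erasure_pmf d1 d2) + (1 - d1 * d2) * packet_sum someone (\<lambda>(w1,w2). w2)"
    using entropy_observations[of "\<lambda>(w1,w2). w2" someone] H_W2 po by simp
  have t6: "H Q (\<lambda>(w1,w2,h). (w2, map (observe snd) h, map fst h))
      = log 2 (card M2) + n * pmf_entropy (erasure_pmf d1 d2) + (1 - d2) * packet_sum snd (\<lambda>(w1,w2). w2)"
    using entropy_observations[of "\<lambda>(w1,w2). w2" snd] H_W2 p2 by simp
  have "H Q (\<lambda>\<omega>. ((\<lambda>(w1,w2,h). w1) \<omega>, (\<lambda>(w1,w2,h). (w2, map (observe someone) h, map fst h)) \<omega>))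
        - H Q (\<lambda>(w1,w2,h). (w2, map (observe someone) h, map fst h))
     \<le> H Q (\<lambda>\<omega>. ((\<lambda>(w1,w2,h). w1) \<omega>, (\<lambda>(w1,w2,h). map (observe fst) h) \<omega>)) - H Q (\<lambda>(w1,w2,h). map (observe fst) h)"
    by (rule cond_entropy_mono[OF finQ, where g="\<lambda>(a,y,s). mask fst (y,s)"])
       (auto simp: case_prod_unfold intro: mask_observe)
  then have bob_knows: "H Q (\<lambda>(w1,w2,h). (w1, w2, map (observe someone) h, map fst h)) - F1
      \<le> H Q (\<lambda>(w1,w2,h). (w2, map (observe someone) h, map fst h))"
    using F1 by (simp add: case_prod_unfold)
  have "H Q (\<lambda>\<omega>. (\<lambda>(a,b,y,s). (a, mask snd (y,s), s)) ((\<lambda>(w1,w2,h). (w1, w2, map (observe someone) h, map fst h)) \<omega>))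
      \<le> H Q (\<lambda>(w1,w2,h). (w1, w2, map (observe someone) h, map fst h))" by (rule H_map_le[OF finQ])
  then have calvin_view: "H Q (\<lambda>(w1,w2,h). (w1, map (observe snd) h, map fst h))
      \<le> H Q (\<lambda>(w1,w2,h). (w1, w2, map (observe someone) h, map fst h))"
    by (simp add: case_prod_unfold mask_observe[symmetric])
  have "H Q (\<lambda>\<omega>. ((\<lambda>(w1,w2,h). w2) \<omega>, (\<lambda>(w1,w2,h). (map (observe snd) h, map fst h)) \<omega>))
        - H Q (\<lambda>(w1,w2,h). (map (observe snd) h, map fst h))
     \<le> H Q (\<lambda>\<omega>. ((\<lambda>(w1,w2,h). w2) \<omega>, (\<lambda>(w1,w2,h). map (observe snd) h) \<omega>)) - H Q (\<lambda>(w1,w2,h). map (observe snd) h)"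
    by (rule cond_entropy_mono[OF finQ, where g=fst]) (auto simp: case_prod_unfold)
  then have calvin_decodes: "H Q (\<lambda>(w1,w2,h). (w2, map (observe snd) h, map fst h))
      - H Q (\<lambda>(w1,w2,h). (map (observe snd) h, map fst h)) \<le> F2"
    using F2 by (simp add: case_prod_unfold)
  show ?thesis using t5 t6 bob_knows calvin_view calvin_decodes Lk by (simp add: case_prod_unfold)
qed

lemma rate_inequality:
  assumes B: "B > 0"
   and F1: "H Q (\<lambda>(w1,w2,h). (w1, map (observe fst) h)) - H Q (\<lambda>(w1,w2,h). map (observe fst) h) \<le> F1"
   and F2: "H Q (\<lambda>(w1,w2,h). (w2, map (observe snd) h)) - H Q (\<lambda>(w1,w2,h). map (observe snd) h) \<le> F2"
   and Lk: "log 2 (card M1) + H Q (\<lambda>(w1,w2,h). (map (observe snd) h, map fst h))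
            - H Q (\<lambda>(w1,w2,h). (w1, map (observe snd) h, map fst h)) \<le> Lk"
  shows "rate_weight1 d1 d2 * log 2 (card M1) + rate_weight2 d1 d2 * log 2 (card M2)
       \<le> n * log 2 B + F1 / (1 - d1) + F2 / (1 - d1 * d2) + (Lk + F1 + F2) / (d2 * (1 - d1))"
  by (rule rate_combination[OF d bob_decoding_sums[OF F1] calvin_decoding_sums[OF F2] joint_sums
        secrecy_sums[OF F1 F2 Lk] packet_sum_someone_le packet_sum_someone_le packet_sum_le[OF B]]) auto

end

section \<open>Exchanging the roles of Bob and Calvin\<close>

text \<open>Calvin's side of the bound is Bob's side for the law with the two messages
  and the two receivers swapped.\<close>
definition swap_slot :: "slot \<Rightarrow> slot" where
  "swap_slot s = (prod.swap (fst s), prod.swap (fst (snd s)), snd (snd s))"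

definition swap_roles :: "nat \<times> nat \<times> slot list \<Rightarrow> nat \<times> nat \<times> slot list" where
  "swap_roles \<omega> = (fst (snd \<omega>), fst \<omega>, map swap_slot (snd (snd \<omega>)))"

lemma erasure_pmf_swap: "map_pmf prod.swap (erasure_pmf d1 d2) = erasure_pmf d2 d1"
  unfolding erasure_pmf_def by (subst pair_commute_pmf) (simp add: map_pmf_comp case_prod_unfold)

lemma (in honest_broadcast) swap_roles_slot:
  assumes i: "i < n"
  shows "map_pmf (\<lambda>(w1,w2,h). (((w1,w2), take i h, snd (snd (h!i))), fst (h!i))) (map_pmf swap_roles Q)
       = pair_pmf (map_pmf (\<lambda>(w1,w2,h). ((w1,w2), take i h, snd (snd (h!i)))) (map_pmf swap_roles Q)) (erasure_pmf d2 d1)"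
proof -
  define phi where "phi = (\<lambda>(w::nat\<times>nat, h0::slot list, x::nat). (prod.swap w, map swap_slot h0, x))"
  have prefix_swap: "(\<lambda>(w1,w2,h). ((w1,w2), take i h, snd (snd (h!i)))) (swap_roles \<omega>)
        = phi ((\<lambda>(w1,w2,h). ((w1,w2), take i h, snd (snd (h!i)))) \<omega>)" if w: "\<omega> \<in> set_pmf Q" for \<omega>
  proof -
    obtain w1 w2 h where om: "\<omega> = (w1,w2,h)" by (cases \<omega>) auto
    have "length h = n" using suppQ[of w1 w2 h] w om by simp
    then show ?thesis using i om by (simp add: swap_roles_def phi_def take_map swap_slot_def)
  qed
  have slot_swap: "(\<lambda>(w1,w2,h). (((w1,w2), take i h, snd (snd (h!i))), fst (h!i))) (swap_roles \<omega>)
        = (\<lambda>(a,e). (phi a, prod.swap e)) ((\<lambda>(w1,w2,h). (((w1,w2), take i h, snd (snd (h!i))), fst (h!i))) \<omega>)"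
    if w: "\<omega> \<in> set_pmf Q" for \<omega>
  proof -
    obtain w1 w2 h where om: "\<omega> = (w1,w2,h)" by (cases \<omega>) auto
    have "length h = n" using suppQ[of w1 w2 h] w om by simp
    then show ?thesis using i om by (simp add: swap_roles_def phi_def take_map swap_slot_def)
  qed
  have prefix_law: "map_pmf (\<lambda>(w1,w2,h). ((w1,w2), take i h, snd (snd (h!i)))) (map_pmf swap_roles Q)
     = map_pmf phi (map_pmf (\<lambda>(w1,w2,h). ((w1,w2), take i h, snd (snd (h!i)))) Q)"
    unfolding map_pmf_comp by (rule map_pmf_cong[OF refl]) (rule prefix_swap)
  have "map_pmf (\<lambda>(w1,w2,h). (((w1,w2), take i h, snd (snd (h!i))), fst (h!i))) (map_pmf swap_roles Q)
     = map_pmf (\<lambda>(a,e). (phi a, prod.swap e)) (map_pmf (\<lambda>(w1,w2,h). (((w1,w2), take i h, snd (snd (h!i))), fst (h!i))) Q)"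
    unfolding map_pmf_comp by (rule map_pmf_cong[OF refl]) (rule slot_swap)
  also have "\<dots> = map_pmf (\<lambda>(a,e). (phi a, prod.swap e)) (pair_pmf (map_pmf (\<lambda>(w1,w2,h). ((w1,w2), take i h, snd (snd (h!i)))) Q) (erasure_pmf d1 d2))"
    unfolding slot[OF i] ..
  also have "\<dots> = pair_pmf (map_pmf phi (map_pmf (\<lambda>(w1,w2,h). ((w1,w2), take i h, snd (snd (h!i)))) Q)) (map_pmf prod.swap (erasure_pmf d1 d2))"
    by (rule map_pair)
  also have "\<dots> = pair_pmf (map_pmf (\<lambda>(w1,w2,h). ((w1,w2), take i h, snd (snd (h!i)))) (map_pmf swap_roles Q)) (erasure_pmf d2 d1)"
    unfolding prefix_law erasure_pmf_swap ..
  finally show ?thesis .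
qed

lemma honest_broadcast_swap:
  assumes "honest_broadcast Q d1 d2 n B M1 M2"
  shows "honest_broadcast (map_pmf swap_roles Q) d2 d1 n B M2 M1"
proof -
  interpret honest_broadcast Q d1 d2 n B M1 M2 by (rule assms)
  show ?thesis
  proof (unfold_locales)
    show "finite (set_pmf (map_pmf swap_roles Q))" using finQ by simp
    show "\<And>w1 w2 h. (w1, w2, h) \<in> set_pmf (map_pmf swap_roles Q) \<Longrightarrow> length h = n \<and> (\<forall>s\<in>set h. snd (snd s) < B)"
    proof -
      fix w1 w2 h assume "(w1, w2, h) \<in> set_pmf (map_pmf swap_roles Q)"
      then obtain a b h0 where "(a,b,h0) \<in> set_pmf Q" "h = map swap_slot h0" by (auto simp: swap_roles_def)
      then show "length h = n \<and> (\<forall>s\<in>set h. snd (snd s) < B)" using suppQ by (auto simp: swap_slot_def)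
    qed
    have "map_pmf (\<lambda>(w1,w2,h). (w1,w2)) (map_pmf swap_roles Q) = map_pmf prod.swap (map_pmf (\<lambda>(w1,w2,h). (w1,w2)) Q)"
      by (simp add: map_pmf_comp swap_roles_def case_prod_unfold)
    also have "\<dots> = pair_pmf (pmf_of_set M2) (pmf_of_set M1)"
      unfolding unif by (subst (2) pair_commute_pmf) (intro map_pmf_cong refl, auto)
    finally show "map_pmf (\<lambda>(w1,w2,h). (w1,w2)) (map_pmf swap_roles Q) = pair_pmf (pmf_of_set M2) (pmf_of_set M1)" .
    show "\<And>i. i < n \<Longrightarrow> map_pmf (\<lambda>(w1,w2,h). (((w1,w2), take i h, snd (snd (h!i))), fst (h!i))) (map_pmf swap_roles Q)
       = pair_pmf (map_pmf (\<lambda>(w1,w2,h). ((w1,w2), take i h, snd (snd (h!i)))) (map_pmf swap_roles Q)) (erasure_pmf d2 d1)"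
      by (rule swap_roles_slot)
  qed (rule M1 M2 d)+
qed

lemma swap_roles_views:
  shows "(\<lambda>(w1,w2,h). (w1, map (observe fst) h)) \<circ> swap_roles = (\<lambda>(w1,w2,h). (w2, map (observe snd) h))"
    and "(\<lambda>(w1,w2,h). map (observe fst) h) \<circ> swap_roles = (\<lambda>(w1,w2,h). map (observe snd) h)"
    and "(\<lambda>(w1,w2,h). (w2, map (observe snd) h)) \<circ> swap_roles = (\<lambda>(w1,w2,h). (w1, map (observe fst) h))"
    and "(\<lambda>(w1,w2,h). map (observe snd) h) \<circ> swap_roles = (\<lambda>(w1,w2,h). map (observe fst) h)"
    and "(\<lambda>(w1,w2,h). (map (observe snd) h, map fst h)) \<circ> swap_roles = (\<lambda>(w1,w2,h). (map (observe fst) h, map prod.swap (map fst h)))"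
    and "(\<lambda>(w1,w2,h). (w1, map (observe snd) h, map fst h)) \<circ> swap_roles = (\<lambda>(w1,w2,h). (w2, map (observe fst) h, map prod.swap (map fst h)))"
  by (auto simp: swap_roles_def swap_slot_def observe_def fun_eq_iff)

lemma H_swap_roles: "H (map_pmf swap_roles Q) g = H Q (g \<circ> swap_roles)"
  unfolding H_def by (simp add: map_pmf_comp comp_def)

lemma inj_map_swap: "inj (map prod.swap :: state list \<Rightarrow> state list)"
  by (rule inj_mapI) (auto simp: inj_def)

lemma H_swap_states1: "H Q (\<lambda>(w1,w2,h). (map (observe fst) h, map prod.swap (map fst h))) = H Q (\<lambda>(w1,w2,h). (map (observe fst) h, map fst h))"
proof -
  have "H Q (\<lambda>(w1,w2,h). (map (observe fst) h, map prod.swap (map fst h)))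
     = H Q (\<lambda>\<omega>. (\<lambda>(a,b). (a, map prod.swap b)) ((\<lambda>(w1,w2,h). (map (observe fst) h, map fst h)) \<omega>))"
    by (simp add: case_prod_unfold)
  also have "\<dots> = H Q (\<lambda>(w1,w2,h). (map (observe fst) h, map fst h))"
    by (rule H_inj) (use inj_map_swap in \<open>auto simp: inj_def\<close>)
  finally show ?thesis .
qed

lemma H_swap_states2: "H Q (\<lambda>(w1,w2,h). (w2, map (observe fst) h, map prod.swap (map fst h))) = H Q (\<lambda>(w1,w2,h). (w2, map (observe fst) h, map fst h))"
proof -
  have "H Q (\<lambda>(w1,w2,h). (w2, map (observe fst) h, map prod.swap (map fst h)))
     = H Q (\<lambda>\<omega>. (\<lambda>(c,a,b). (c, a, map prod.swap b)) ((\<lambda>(w1,w2,h). (w2, map (observe fst) h, map fst h)) \<omega>))"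
    by (simp add: case_prod_unfold)
  also have "\<dots> = H Q (\<lambda>(w1,w2,h). (w2, map (observe fst) h, map fst h))"
    by (rule H_inj) (use inj_map_swap in \<open>auto simp: inj_def\<close>)
  finally show ?thesis .
qed

section \<open>From a secure scheme to the entropy inequalities\<close>

lemma obs1_observe: "obs1 = observe fst" by (rule ext) (simp add: obs1_def observe_def)
lemma obs2_observe: "obs2 = observe snd" by (rule ext) (simp add: obs2_def observe_def)
lemma true_state_fst: "true_state = fst" by (rule ext) (simp add: true_state_def)

lemma card_msgs: "card (msgs q L N) = q ^ (L * N)" unfolding msgs_def by simp

lemma msgs_ne: "q > 0 \<Longrightarrow> msgs q L N \<noteq> {}"
proof -
  assume "q > 0"
  then have "0 \<in> msgs q L N" unfolding msgs_def by simp
  then show ?thesis by blast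
qed

lemma log_card_msgs: "q > 0 \<Longrightarrow> log 2 (card (msgs q L N)) = real N * real L * log 2 q"
  unfolding card_msgs by (simp add: log_nat_power of_nat_power)

lemma honest_joint_broadcast:
  assumes fb: "\<forall>i w1 w2 t s. f i w1 w2 t s < B"
    and M1: "finite M1" "M1 \<noteq> {}" and M2: "finite M2" "M2 \<noteq> {}"
    and d: "0 < d1" "d1 < 1" "0 < d2" "d2 < 1"
  shows "honest_broadcast (honest_joint d1 d2 n f PA (pmf_of_set M1) (pmf_of_set M2)) d1 d2 n B M1 M2"
proof (unfold_locales)
  let ?Q = "honest_joint d1 d2 n f PA (pmf_of_set M1) (pmf_of_set M2)"
  have sub: "set_pmf ?Q \<subseteq> M1 \<times> M2 \<times> {h. set h \<subseteq> ((UNIV :: state set) \<times> (UNIV :: state set) \<times> {..<B}) \<and> length h = n}"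
  proof
    fix \<omega> assume w: "\<omega> \<in> set_pmf ?Q"
    obtain w1 w2 h where om: "\<omega> = (w1,w2,h)" by (cases \<omega>) auto
    have "w1 \<in> set_pmf (pmf_of_set M1) \<and> w2 \<in> set_pmf (pmf_of_set M2) \<and> length h = n \<and> (\<forall>s\<in>set h. fst (snd s) = fst s \<and> snd (snd s) < B)"
      using set_honest_joint[OF fb, of w1 w2 h] w om by blast
    then have "w1 \<in> M1" "w2 \<in> M2" "length h = n" "set h \<subseteq> ((UNIV :: state set) \<times> (UNIV :: state set) \<times> {..<B})"
      using M1 M2 by auto
    then show "\<omega> \<in> M1 \<times> M2 \<times> {h. set h \<subseteq> ((UNIV :: state set) \<times> (UNIV :: state set) \<times> {..<B}) \<and> length h = n}"
      using om by simp
  qed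
  have "finite {h. set h \<subseteq> ((UNIV :: state set) \<times> (UNIV :: state set) \<times> {..<B}) \<and> length h = n}"
    by (rule finite_lists_length_eq) (intro finite_cartesian_product, auto)
  then have "finite (M1 \<times> M2 \<times> {h. set h \<subseteq> ((UNIV :: state set) \<times> (UNIV :: state set) \<times> {..<B}) \<and> length h = n})"
    using M1 M2 by (intro finite_cartesian_product)
  then show "finite (set_pmf ?Q)" using sub finite_subset by blast
  show "\<And>w1 w2 h. (w1, w2, h) \<in> set_pmf ?Q \<Longrightarrow> length h = n \<and> (\<forall>s\<in>set h. snd (snd s) < B)"
    using set_honest_joint[OF fb] by blast
  show "map_pmf (\<lambda>(w1,w2,h). (w1,w2)) ?Q = pair_pmf (pmf_of_set M1) (pmf_of_set M2)" by (rule honest_joint_messages)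
  show "\<And>i. i < n \<Longrightarrow> map_pmf (\<lambda>(w1,w2,h). (((w1,w2), take i h, snd (snd (h!i))), fst (h!i))) ?Q
        = pair_pmf (map_pmf (\<lambda>(w1,w2,h). ((w1,w2), take i h, snd (snd (h!i)))) ?Q) (erasure_pmf d1 d2)"
    by (rule honest_joint_slot)
qed (rule M1 M2 d)+

lemma fano_decoder:
  fixes W :: "'o \<Rightarrow> nat" and Z :: "'o \<Rightarrow> 'z" and phi :: "'z \<Rightarrow> nat"
  assumes finQ: "finite (set_pmf Q)" and WM: "\<And>\<omega>. \<omega> \<in> set_pmf Q \<Longrightarrow> W \<omega> \<in> M"
    and M: "finite M" "M \<noteq> {}"
    and err: "measure_pmf.prob Q {\<omega>. phi (Z \<omega>) \<noteq> W \<omega>} \<le> eps" and e: "0 < eps" "eps < 1"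
  shows "H Q (\<lambda>\<omega>. (W \<omega>, Z \<omega>)) - H Q Z \<le> - log 2 (1 - eps) - eps * log 2 eps + eps * log 2 (card M)"
proof -
  have "H Q (\<lambda>\<omega>. (W \<omega>, Z \<omega>)) - H Q Z \<le> H Q (\<lambda>\<omega>. (W \<omega>, phi (Z \<omega>))) - H Q (\<lambda>\<omega>. phi (Z \<omega>))"
    by (rule cond_entropy_mono[OF finQ, where g=phi]) simp
  also have "\<dots> \<le> - log 2 (1 - eps) - eps * log 2 eps + eps * log 2 (card M)"
    by (rule fano_inequality[OF finQ M WM err e])
  finally show ?thesis .
qed

lemma leakage_entropy:
  fixes P :: "outcome pmf" and Q :: "(nat \<times> nat \<times> slot list) pmf"
    and Wf :: "outcome \<Rightarrow> nat" and Yf :: "outcome \<Rightarrow> obs list" and Tf :: "outcome \<Rightarrow> nat"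
    and w :: "nat \<times> nat \<times> slot list \<Rightarrow> nat" and y :: "slot list \<Rightarrow> obs list"
  assumes J: "map_pmf (\<lambda>\<omega>. ((W1_of \<omega>, W2_of \<omega>, hist_of \<omega>), Tf \<omega>)) P = pair_pmf Q PT"
    and Wf: "\<And>\<omega>. Wf \<omega> = w (W1_of \<omega>, W2_of \<omega>, hist_of \<omega>)"
    and Yf: "\<And>\<omega>. Yf \<omega> = y (hist_of \<omega>)"
    and finQ: "finite (set_pmf Q)"
  shows "MI P Wf (\<lambda>\<omega>. (Yf \<omega>, S_of \<omega>, Tf \<omega>))
     = H Q w + H Q (\<lambda>(w1,w2,h). (y h, map fst h)) - H Q (\<lambda>\<omega>. (w \<omega>, y (snd (snd \<omega>)), map fst (snd (snd \<omega>))))"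
proof -
  define g where "g = (\<lambda>((a::obs list, b::state list), c::nat). (a, b, c))"
  have gi: "inj g" unfolding g_def by (auto simp: inj_def)
  have "MI P Wf (\<lambda>\<omega>. (Yf \<omega>, S_of \<omega>, Tf \<omega>)) = MI P Wf (\<lambda>\<omega>. g ((Yf \<omega>, S_of \<omega>), Tf \<omega>))"
    by (simp add: g_def)
  also have "\<dots> = MI P Wf (\<lambda>\<omega>. ((Yf \<omega>, S_of \<omega>), Tf \<omega>))" by (rule MI_inj[OF gi])
  also have "\<dots> = pmf_entropy (map_pmf fst (map_pmf (\<lambda>\<omega>. (w \<omega>, y (snd (snd \<omega>)), map fst (snd (snd \<omega>)))) Q))
      + pmf_entropy (map_pmf snd (map_pmf (\<lambda>\<omega>. (w \<omega>, y (snd (snd \<omega>)), map fst (snd (snd \<omega>)))) Q))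
      - pmf_entropy (map_pmf (\<lambda>\<omega>. (w \<omega>, y (snd (snd \<omega>)), map fst (snd (snd \<omega>)))) Q)"
  proof (rule MI_indep)
    have "map_pmf (\<lambda>\<omega>. ((Wf \<omega>, Yf \<omega>, S_of \<omega>), Tf \<omega>)) P
       = map_pmf (\<lambda>(a, t). ((\<lambda>\<omega>. (w \<omega>, y (snd (snd \<omega>)), map fst (snd (snd \<omega>)))) a, id t))
           (map_pmf (\<lambda>\<omega>. ((W1_of \<omega>, W2_of \<omega>, hist_of \<omega>), Tf \<omega>)) P)"
      by (simp add: map_pmf_comp Wf Yf S_of_def true_state_fst)
    also have "\<dots> = pair_pmf (map_pmf (\<lambda>\<omega>. (w \<omega>, y (snd (snd \<omega>)), map fst (snd (snd \<omega>)))) Q) (map_pmf id PT)"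
      unfolding J by (rule map_pair)
    finally show "map_pmf (\<lambda>\<omega>. ((Wf \<omega>, Yf \<omega>, S_of \<omega>), Tf \<omega>)) P
       = pair_pmf (map_pmf (\<lambda>\<omega>. (w \<omega>, y (snd (snd \<omega>)), map fst (snd (snd \<omega>)))) Q) PT" by simp
    show "finite (set_pmf (map_pmf (\<lambda>\<omega>. (w \<omega>, y (snd (snd \<omega>)), map fst (snd (snd \<omega>)))) Q))" using finQ by simp
  qed
  also have "\<dots> = H Q w + H Q (\<lambda>(w1,w2,h). (y h, map fst h)) - H Q (\<lambda>\<omega>. (w \<omega>, y (snd (snd \<omega>)), map fst (snd (snd \<omega>))))"
    unfolding H_def by (simp add: map_pmf_comp case_prod_unfold)
  finally show ?thesis .
qed

definition fano_slack :: "real \<Rightarrow> real" where "fano_slack e = - log 2 (1 - e) - e * log 2 e"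

lemma fano_slack_tendsto: "(fano_slack \<longlongrightarrow> 0) (at_right 0)"
  unfolding fano_slack_def by real_asymp

lemma fano_slack_nonneg: "0 < e \<Longrightarrow> e < 1 \<Longrightarrow> fano_slack e \<ge> 0"
proof -
  assume e: "0 < e" "e < 1"
  have "log 2 (1 - e) \<le> 0" using e by simp
  moreover have "log 2 e \<le> 0" using e by simp
  then have "e * log 2 e \<le> 0" using e by (simp add: mult_nonneg_nonpos)
  ultimately show ?thesis unfolding fano_slack_def by simp
qed

lemma scheme_error_probs:
  assumes q: "q > 0" and sch: "is_scheme q L d1 d2 n eps N1 N2 f phi1 phi2 PA PB PC"
  defines "Q \<equiv> honest_joint d1 d2 n f PA (pmf_of_set (msgs q L N1)) (pmf_of_set (msgs q L N2))"
  shows "measure_pmf.prob Q {\<omega>. phi1 (map (observe fst) (snd (snd \<omega>))) \<noteq> fst \<omega>} \<le> eps"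
    and "measure_pmf.prob Q {\<omega>. phi2 (map (observe snd) (snd (snd \<omega>))) \<noteq> fst (snd \<omega>)} \<le> eps"
proof -
  define M1 where "M1 = msgs q L N1"
  define M2 where "M2 = msgs q L N2"
  define P where "P = channel_exp d1 d2 n f PA PB PC (pmf_of_set M1) (pmf_of_set M2) honest_ack honest_ack"
  have M1f: "finite M1" "M1 \<noteq> {}" and M2f: "finite M2" "M2 \<noteq> {}"
    unfolding M1_def M2_def using msgs_ne[OF q] by (auto simp: msgs_def)
  have rel: "\<And>w1 w2. w1 \<in> M1 \<Longrightarrow> w2 \<in> M2 \<Longrightarrow>
     measure_pmf.prob (channel_exp d1 d2 n f PA PB PC (return_pmf w1) (return_pmf w2) honest_ack honest_ack) {\<omega>. phi1 (Y1_of \<omega>) \<noteq> W1_of \<omega>} < eps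
   \<and> measure_pmf.prob (channel_exp d1 d2 n f PA PB PC (return_pmf w1) (return_pmf w2) honest_ack honest_ack) {\<omega>. phi2 (Y2_of \<omega>) \<noteq> W2_of \<omega>} < eps"
    using sch unfolding is_scheme_def M1_def M2_def Let_def by blast
  have PQ: "map_pmf (\<lambda>\<omega>. (W1_of \<omega>, W2_of \<omega>, hist_of \<omega>)) P = Q"
    unfolding P_def Q_def M1_def M2_def by (rule honest_exp)
  have "measure_pmf.prob Q {\<omega>. phi1 (map (observe fst) (snd (snd \<omega>))) \<noteq> fst \<omega>}
      = measure_pmf.prob P {\<omega>. phi1 (Y1_of \<omega>) \<noteq> W1_of \<omega>}"
    unfolding PQ[symmetric] by (simp add: vimage_def Y1_of_def obs1_observe)
  also have "\<dots> \<le> eps" unfolding P_def by (rule error_prob_uniform_le[OF M1f M2f]) (use rel in blast)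
  finally show "measure_pmf.prob Q {\<omega>. phi1 (map (observe fst) (snd (snd \<omega>))) \<noteq> fst \<omega>} \<le> eps" .
  have "measure_pmf.prob Q {\<omega>. phi2 (map (observe snd) (snd (snd \<omega>))) \<noteq> fst (snd \<omega>)}
      = measure_pmf.prob P {\<omega>. phi2 (Y2_of \<omega>) \<noteq> W2_of \<omega>}"
    unfolding PQ[symmetric] by (simp add: vimage_def Y2_of_def obs2_observe)
  also have "\<dots> \<le> eps" unfolding P_def by (rule error_prob_uniform_le[OF M1f M2f]) (use rel in blast)
  finally show "measure_pmf.prob Q {\<omega>. phi2 (map (observe snd) (snd (snd \<omega>))) \<noteq> fst (snd \<omega>)} \<le> eps" .
qed

lemma hbc_scheme_decoding:
  assumes q: "q > 0" and d: "0 < d1" "d1 < 1" "0 < d2" "d2 < 1" and e: "0 < eps" "eps < 1"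
    and sec: "secure_hbc q L d1 d2 n eps N1 N2 f phi1 phi2 PA PB PC"
  defines "Q \<equiv> honest_joint d1 d2 n f PA (pmf_of_set (msgs q L N1)) (pmf_of_set (msgs q L N2))"
  shows "H Q (\<lambda>(w1,w2,h). (w1, map (observe fst) h)) - H Q (\<lambda>(w1,w2,h). map (observe fst) h)
           \<le> fano_slack eps + eps * (real N1 * real L * log 2 q)"
    and "H Q (\<lambda>(w1,w2,h). (w2, map (observe snd) h)) - H Q (\<lambda>(w1,w2,h). map (observe snd) h)
           \<le> fano_slack eps + eps * (real N2 * real L * log 2 q)"
proof -
  define M1 where "M1 = msgs q L N1"
  define M2 where "M2 = msgs q L N2"
  have M1f: "finite M1" "M1 \<noteq> {}" and M2f: "finite M2" "M2 \<noteq> {}"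
    unfolding M1_def M2_def using msgs_ne[OF q] by (auto simp: msgs_def)
  have sch: "is_scheme q L d1 d2 n eps N1 N2 f phi1 phi2 PA PB PC" using sec unfolding secure_hbc_def by blast
  have fb: "\<forall>i w1 w2 t s. f i w1 w2 t s < q ^ L" using sch unfolding is_scheme_def by blast
  note err = scheme_error_probs[OF q sch, folded Q_def]
  have Q_eq: "Q = honest_joint d1 d2 n f PA (pmf_of_set M1) (pmf_of_set M2)" unfolding Q_def M1_def M2_def ..
  interpret honest_broadcast Q d1 d2 n "q ^ L" M1 M2
    unfolding Q_eq by (rule honest_joint_broadcast[OF fb M1f M2f d])
  have inM: "fst \<omega> \<in> M1 \<and> fst (snd \<omega>) \<in> M2" if "\<omega> \<in> set_pmf Q" for \<omega>
  proof -
    obtain w1 w2 h where om: "\<omega> = (w1,w2,h)" by (cases \<omega>) auto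
    show ?thesis using set_honest_joint[OF fb, of w1 w2 h d1 d2 n PA "pmf_of_set M1" "pmf_of_set M2"] that om M1f M2f
      unfolding Q_eq by auto
  qed
  show "H Q (\<lambda>(w1,w2,h). (w1, map (observe fst) h)) - H Q (\<lambda>(w1,w2,h). map (observe fst) h)
           \<le> fano_slack eps + eps * (real N1 * real L * log 2 q)"
    using fano_decoder[OF finQ, of fst M1 phi1 "\<lambda>\<omega>. map (observe fst) (snd (snd \<omega>))", OF _ M1f err(1) e] inM
      log_card_msgs[OF q, of L N1]
    unfolding fano_slack_def M1_def by (simp add: case_prod_unfold)
  show "H Q (\<lambda>(w1,w2,h). (w2, map (observe snd) h)) - H Q (\<lambda>(w1,w2,h). map (observe snd) h)
           \<le> fano_slack eps + eps * (real N2 * real L * log 2 q)"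
    using fano_decoder[OF finQ, of "\<lambda>\<omega>. fst (snd \<omega>)" M2 phi2 "\<lambda>\<omega>. map (observe snd) (snd (snd \<omega>))", OF _ M2f err(2) e] inM
      log_card_msgs[OF q, of L N2]
    unfolding fano_slack_def M2_def by (simp add: case_prod_unfold)
qed

lemma hbc_scheme_secrecy:
  assumes q: "q > 0" and d: "0 < d1" "d1 < 1" "0 < d2" "d2 < 1" and sec: "secure_hbc q L d1 d2 n eps N1 N2 f phi1 phi2 PA PB PC"
  defines "Q \<equiv> honest_joint d1 d2 n f PA (pmf_of_set (msgs q L N1)) (pmf_of_set (msgs q L N2))"
  shows "log 2 (card (msgs q L N1)) + H Q (\<lambda>(w1,w2,h). (map (observe snd) h, map fst h))
            - H Q (\<lambda>(w1,w2,h). (w1, map (observe snd) h, map fst h)) \<le> eps"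
    and "log 2 (card (msgs q L N2)) + H Q (\<lambda>(w1,w2,h). (map (observe fst) h, map fst h))
            - H Q (\<lambda>(w1,w2,h). (w2, map (observe fst) h, map fst h)) \<le> eps"
proof -
  define M1 where "M1 = msgs q L N1"
  define M2 where "M2 = msgs q L N2"
  define P where "P = channel_exp d1 d2 n f PA PB PC (pmf_of_set M1) (pmf_of_set M2) honest_ack honest_ack"
  have M1f: "finite M1" "M1 \<noteq> {}" and M2f: "finite M2" "M2 \<noteq> {}"
    unfolding M1_def M2_def using msgs_ne[OF q] by (auto simp: msgs_def)
  have sch: "is_scheme q L d1 d2 n eps N1 N2 f phi1 phi2 PA PB PC"
    and mi1: "MI P W1_of (\<lambda>\<omega>. (Y2_of \<omega>, S_of \<omega>, thC_of \<omega>)) < eps"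
    and mi2: "MI P W2_of (\<lambda>\<omega>. (Y1_of \<omega>, S_of \<omega>, thB_of \<omega>)) < eps"
    using sec unfolding secure_hbc_def P_def M1_def M2_def Let_def by auto
  have fb: "\<forall>i w1 w2 t s. f i w1 w2 t s < q ^ L" using sch unfolding is_scheme_def by blast
  have Q_eq: "Q = honest_joint d1 d2 n f PA (pmf_of_set M1) (pmf_of_set M2)" unfolding Q_def M1_def M2_def ..
  interpret honest_broadcast Q d1 d2 n "q ^ L" M1 M2
    unfolding Q_eq by (rule honest_joint_broadcast[OF fb M1f M2f d])
  have "MI P W1_of (\<lambda>\<omega>. (Y2_of \<omega>, S_of \<omega>, thC_of \<omega>))
     = H Q (\<lambda>(w1,w2,h). w1) + H Q (\<lambda>(w1,w2,h). (map (observe snd) h, map fst h))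
       - H Q (\<lambda>\<omega>. ((\<lambda>(w1,w2,h). w1) \<omega>, map (observe snd) (snd (snd \<omega>)), map fst (snd (snd \<omega>))))"
    by (rule leakage_entropy[where PT=PC], simp only: P_def Q_eq honest_exp_calvin, simp,
        simp add: Y2_of_def obs2_observe, rule finQ)
  then show "log 2 (card (msgs q L N1)) + H Q (\<lambda>(w1,w2,h). (map (observe snd) h, map fst h))
            - H Q (\<lambda>(w1,w2,h). (w1, map (observe snd) h, map fst h)) \<le> eps"
    using mi1 H_W1 unfolding M1_def by (simp add: case_prod_unfold)
  have "MI P W2_of (\<lambda>\<omega>. (Y1_of \<omega>, S_of \<omega>, thB_of \<omega>))
     = H Q (\<lambda>(w1,w2,h). w2) + H Q (\<lambda>(w1,w2,h). (map (observe fst) h, map fst h))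
       - H Q (\<lambda>\<omega>. ((\<lambda>(w1,w2,h). w2) \<omega>, map (observe fst) (snd (snd \<omega>)), map fst (snd (snd \<omega>))))"
    by (rule leakage_entropy[where PT=PB], simp only: P_def Q_eq honest_exp_bob, simp,
        simp add: Y1_of_def obs1_observe, rule finQ)
  then show "log 2 (card (msgs q L N2)) + H Q (\<lambda>(w1,w2,h). (map (observe fst) h, map fst h))
            - H Q (\<lambda>(w1,w2,h). (w2, map (observe fst) h, map fst h)) \<le> eps"
    using mi2 H_W2 unfolding M2_def by (simp add: case_prod_unfold)
qed


text \<open>All error terms are absorbed into one multiple of \<open>F1 + F2 + eps\<close>.\<close>
definition slack_weight :: "real \<Rightarrow> real \<Rightarrow> real" where
  "slack_weight d1 d2 = 1 / (1 - d1) + 1 / (1 - d1 * d2) + 1 / (d2 * (1 - d1))"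

lemma slack_weight_bound:
  assumes d: "0 < d1" "d1 < 1" "0 < d2" "d2 < 1" and F: "0 \<le> F1" "0 \<le> F2" "0 \<le> e"
  shows "F1 / (1 - d1) + F2 / (1 - d1 * d2) + (e + F1 + F2) / (d2 * (1 - d1)) \<le> slack_weight d1 d2 * (F1 + F2 + e)"
proof -
  have pos: "0 < 1 - d1" "0 < 1 - d1 * d2" "0 < d2 * (1 - d1)" using d one_minus_product_pos[of d1 d2] by simp_all
  have "F1 / (1 - d1) + F2 / (1 - d1 * d2) + (e + F1 + F2) / (d2 * (1 - d1))
      = (1 / (1 - d1) + 1 / (d2 * (1 - d1))) * F1 + (1 / (1 - d1 * d2) + 1 / (d2 * (1 - d1))) * F2
        + 1 / (d2 * (1 - d1)) * e"
    by (simp add: add_divide_distrib algebra_simps)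
  also have "\<dots> \<le> slack_weight d1 d2 * F1 + slack_weight d1 d2 * F2 + slack_weight d1 d2 * e"
    unfolding slack_weight_def using F pos by (intro add_mono mult_right_mono) auto
  finally show ?thesis by (simp only: distrib_left)
qed

lemma hbc_scheme_rate_inequalities:
  fixes q L N1 N2 n :: nat and d1 d2 eps :: real
  assumes q: "q > 0" and d: "0 < d1" "d1 < 1" "0 < d2" "d2 < 1" and e: "0 < eps" "eps < 1"
    and sec: "secure_hbc q L d1 d2 n eps N1 N2 f phi1 phi2 PA PB PC"
  defines "T1 \<equiv> real N1 * real L * log 2 q" and "T2 \<equiv> real N2 * real L * log 2 q"
    and "F1 \<equiv> fano_slack eps + eps * (real N1 * real L * log 2 q)"
    and "F2 \<equiv> fano_slack eps + eps * (real N2 * real L * log 2 q)"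
  shows "rate_weight1 d1 d2 * T1 + rate_weight2 d1 d2 * T2
           \<le> n * (L * log 2 q) + F1 / (1 - d1) + F2 / (1 - d1 * d2) + (eps + F1 + F2) / (d2 * (1 - d1))"
    and "rate_weight1 d2 d1 * T2 + rate_weight2 d2 d1 * T1
           \<le> n * (L * log 2 q) + F2 / (1 - d2) + F1 / (1 - d2 * d1) + (eps + F2 + F1) / (d1 * (1 - d2))"
proof -
  define M1 where "M1 = msgs q L N1"
  define M2 where "M2 = msgs q L N2"
  define Q where "Q = honest_joint d1 d2 n f PA (pmf_of_set M1) (pmf_of_set M2)"
  have M1f: "finite M1" "M1 \<noteq> {}" and M2f: "finite M2" "M2 \<noteq> {}"
    unfolding M1_def M2_def using msgs_ne[OF q] by (auto simp: msgs_def)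
  have "is_scheme q L d1 d2 n eps N1 N2 f phi1 phi2 PA PB PC" using sec unfolding secure_hbc_def by blast
  then have fb: "\<forall>i w1 w2 t s. f i w1 w2 t s < q ^ L" unfolding is_scheme_def by blast
  have T: "log 2 (card M1) = T1" "log 2 (card M2) = T2" "log 2 (q ^ L) = L * log 2 q"
    unfolding M1_def M2_def T1_def T2_def using log_card_msgs[OF q] q by (simp_all add: log_nat_power)
  note decoding = hbc_scheme_decoding[OF q d e sec, folded M1_def M2_def, folded Q_def F1_def F2_def]
  note secrecy = hbc_scheme_secrecy[OF q d sec, folded M1_def M2_def, folded Q_def]
  interpret bob_side: honest_broadcast Q d1 d2 n "q ^ L" M1 M2
    unfolding Q_def by (rule honest_joint_broadcast[OF fb M1f M2f d])
  interpret calvin_side: honest_broadcast "map_pmf swap_roles Q" d2 d1 n "q ^ L" M2 M1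
    by (rule honest_broadcast_swap[OF bob_side.honest_broadcast_axioms])
  have "rate_weight1 d1 d2 * log 2 (card M1) + rate_weight2 d1 d2 * log 2 (card M2)
      \<le> n * log 2 (q ^ L) + F1 / (1 - d1) + F2 / (1 - d1 * d2) + (eps + F1 + F2) / (d2 * (1 - d1))"
    by (rule bob_side.rate_inequality[OF _ decoding secrecy(1)]) (use q in simp)
  then show "rate_weight1 d1 d2 * T1 + rate_weight2 d1 d2 * T2
      \<le> n * (L * log 2 q) + F1 / (1 - d1) + F2 / (1 - d1 * d2) + (eps + F1 + F2) / (d2 * (1 - d1))"
    unfolding T .
  have "H (map_pmf swap_roles Q) (\<lambda>(w1,w2,h). (w1, map (observe fst) h))
      - H (map_pmf swap_roles Q) (\<lambda>(w1,w2,h). map (observe fst) h) \<le> F2"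
    unfolding H_swap_roles swap_roles_views by (rule decoding(2))
  moreover have "H (map_pmf swap_roles Q) (\<lambda>(w1,w2,h). (w2, map (observe snd) h))
      - H (map_pmf swap_roles Q) (\<lambda>(w1,w2,h). map (observe snd) h) \<le> F1"
    unfolding H_swap_roles swap_roles_views by (rule decoding(1))
  moreover have "log 2 (card M2) + H (map_pmf swap_roles Q) (\<lambda>(w1,w2,h). (map (observe snd) h, map fst h))
      - H (map_pmf swap_roles Q) (\<lambda>(w1,w2,h). (w1, map (observe snd) h, map fst h)) \<le> eps"
    unfolding H_swap_roles swap_roles_views H_swap_states1 H_swap_states2 by (rule secrecy(2))
  ultimately have "rate_weight1 d2 d1 * log 2 (card M2) + rate_weight2 d2 d1 * log 2 (card M1)
      \<le> n * log 2 (q ^ L) + F2 / (1 - d2) + F1 / (1 - d2 * d1) + (eps + F2 + F1) / (d1 * (1 - d2))"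
    by (rule calvin_side.rate_inequality[rotated]) (use q in simp)
  then show "rate_weight1 d2 d1 * T2 + rate_weight2 d2 d1 * T1
      \<le> n * (L * log 2 q) + F2 / (1 - d2) + F1 / (1 - d2 * d1) + (eps + F2 + F1) / (d1 * (1 - d2))"
    unfolding T .
qed

lemma hbc_scheme_bound:
  fixes q L N1 N2 n :: nat and d1 d2 eps :: real
  assumes q: "q > 0" and d: "0 < d1" "d1 < 1" "0 < d2" "d2 < 1" and e: "0 < eps" "eps < 1"
    and sec: "secure_hbc q L d1 d2 n eps N1 N2 f phi1 phi2 PA PB PC"
  defines "T1 \<equiv> real N1 * real L * log 2 q" and "T2 \<equiv> real N2 * real L * log 2 q"
  shows "rate_weight1 d1 d2 * T1 + rate_weight2 d1 d2 * T2
           \<le> n * (L * log 2 q) + slack_weight d1 d2 * (2 * fano_slack eps + eps + eps * (T1 + T2))"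
    and "rate_weight1 d2 d1 * T2 + rate_weight2 d2 d1 * T1
           \<le> n * (L * log 2 q) + slack_weight d2 d1 * (2 * fano_slack eps + eps + eps * (T1 + T2))"
proof -
  define F1 where "F1 = fano_slack eps + eps * T1"
  define F2 where "F2 = fano_slack eps + eps * T2"
  have F: "0 \<le> F1" "0 \<le> F2" "0 \<le> eps" "F1 + F2 + eps = 2 * fano_slack eps + eps + eps * (T1 + T2)"
    "F2 + F1 + eps = 2 * fano_slack eps + eps + eps * (T1 + T2)"
    using fano_slack_nonneg[OF e] e q unfolding F1_def F2_def T1_def T2_def by (simp_all add: algebra_simps)
  note ineqs = hbc_scheme_rate_inequalities[OF q d e sec, folded T1_def T2_def, folded F1_def F2_def]
  show "rate_weight1 d1 d2 * T1 + rate_weight2 d1 d2 * T2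
      \<le> n * (L * log 2 q) + slack_weight d1 d2 * (2 * fano_slack eps + eps + eps * (T1 + T2))"
    using ineqs(1) slack_weight_bound[OF d F(1-3)] unfolding F(4) by linarith
  show "rate_weight1 d2 d1 * T2 + rate_weight2 d2 d1 * T1
      \<le> n * (L * log 2 q) + slack_weight d2 d1 * (2 * fano_slack eps + eps + eps * (T1 + T2))"
    using ineqs(2) slack_weight_bound[of d2 d1 F2 F1 eps] d F(1-3) unfolding F(5) by linarith
qed

section \<open>Passing to the limit\<close>

text \<open>One level of the limit: if the weighted bound holds up to a fixed additive
  slack \<open>G\<close> and a relative slack \<open>a < 1\<close> for normalised rates arbitrarily close to
  \<open>R1\<close>, \<open>R2\<close>, then \<open>R1\<close>, \<open>R2\<close> satisfy it with the slacks absorbed.  (Weights at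
  least one make the relative slack absorbable.)\<close>
lemma weighted_rate_bound_fixed_slack:
  fixes A1 A2 a G K R1 R2 :: real
  assumes A: "1 \<le> A1" "1 \<le> A2" and a: "0 \<le> a" "a < 1" and G: "0 \<le> G"
    and approx: "\<And>t. 0 < t \<Longrightarrow> \<exists>T1 T2 n. 1 \<le> n \<and> 0 \<le> T1 \<and> 0 \<le> T2 \<and>
         A1 * T1 + A2 * T2 \<le> n * K + G + a * (T1 + T2) \<and> R1 - t < T1 / n \<and> R2 - t < T2 / n"
  shows "A1 * R1 + A2 * R2 \<le> (K + G) / (1 - a)"
proof (rule field_le_epsilon)
  fix t :: real assume t: "0 < t"
  obtain T1 T2 n where n: "1 \<le> n" and T: "0 \<le> T1" "0 \<le> T2"
    and ineq: "A1 * T1 + A2 * T2 \<le> n * K + G + a * (T1 + T2)"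
    and r: "R1 - t / (A1 + A2) < T1 / n" "R2 - t / (A1 + A2) < T2 / n"
    using approx[of "t / (A1 + A2)"] t A by auto
  have "T1 + T2 \<le> A1 * T1 + A2 * T2"
    using A T by (intro add_mono) (simp_all add: mult_le_cancel_right1)
  then have "a * (T1 + T2) \<le> a * (A1 * T1 + A2 * T2)" using a by (intro mult_left_mono) auto
  then have "(1 - a) * (A1 * T1 + A2 * T2) \<le> A1 * T1 + A2 * T2 - a * (T1 + T2)"
    by (simp add: algebra_simps)
  also have "\<dots> \<le> n * K + G" using ineq by simp
  also have "\<dots> \<le> n * (K + G)" using n G mult_right_mono[of 1 n G] by (simp add: algebra_simps)
  finally have "(A1 * T1 + A2 * T2) / n \<le> (K + G) / (1 - a)"
    using n a by (simp add: field_simps)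
  moreover have "A1 * R1 + A2 * R2 \<le> A1 * (T1 / n) + A2 * (T2 / n) + t"
  proof -
    have "A1 * R1 + A2 * R2 \<le> A1 * (T1 / n + t / (A1 + A2)) + A2 * (T2 / n + t / (A1 + A2))"
      using r A by (intro add_mono mult_left_mono) auto
    also have "\<dots> = A1 * (T1 / n) + A2 * (T2 / n) + (A1 + A2) * (t / (A1 + A2))"
      by (simp add: algebra_simps add_divide_distrib)
    also have "(A1 + A2) * (t / (A1 + A2)) = t" using A by simp
    finally show ?thesis .
  qed
  ultimately show "A1 * R1 + A2 * R2 \<le> (K + G) / (1 - a) + t"
    using n by (simp add: add_divide_distrib)
qed

lemma rate_limit:
  fixes A1 A2 c K R1 R2 :: real
  assumes A: "1 \<le> A1" "1 \<le> A2" and c: "0 \<le> c" and K: "0 \<le> K"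
    and approx: "\<And>eps eps'. 0 < eps \<Longrightarrow> eps < 1 \<Longrightarrow> 0 < eps' \<Longrightarrow>
       \<exists>T1 T2 n. 1 \<le> n \<and> 0 \<le> T1 \<and> 0 \<le> T2 \<and>
         A1 * T1 + A2 * T2 \<le> n * K + c * (2 * fano_slack eps + eps + eps * (T1 + T2)) \<and>
         R1 - eps' < T1 / n \<and> R2 - eps' < T2 / n"
  shows "A1 * R1 + A2 * R2 \<le> K"
proof -
  define G where "G = (\<lambda>eps. c * (2 * fano_slack eps + eps))"
  have bound: "A1 * R1 + A2 * R2 \<le> (K + G eps) / (1 - c * eps)" if e: "0 < eps" "eps < 1" "c * eps < 1" for eps
  proof (rule weighted_rate_bound_fixed_slack[OF A])
    show "0 \<le> c * eps" "c * eps < 1" "0 \<le> G eps"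
      using c e fano_slack_nonneg[OF e(1,2)] unfolding G_def by simp_all
    show "\<exists>T1 T2 n. 1 \<le> n \<and> 0 \<le> T1 \<and> 0 \<le> T2 \<and> A1 * T1 + A2 * T2 \<le> n * K + G eps + c * eps * (T1 + T2)
        \<and> R1 - t < T1 / n \<and> R2 - t < T2 / n" if "0 < t" for t
      using approx[OF e(1,2) that] unfolding G_def by (simp add: algebra_simps)
  qed
  have "((\<lambda>eps. c * (2 * fano_slack eps + eps)) \<longlongrightarrow> c * (2 * 0 + 0)) (at_right (0::real))"
    by (intro tendsto_intros fano_slack_tendsto)
  then have G_lim: "(G \<longlongrightarrow> 0) (at_right 0)" unfolding G_def by simp
  have "((\<lambda>eps. (K + G eps) / (1 - c * eps)) \<longlongrightarrow> (K + 0) / (1 - c * 0)) (at_right 0)"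
    by (intro tendsto_intros G_lim) auto
  moreover have "eventually (\<lambda>eps. A1 * R1 + A2 * R2 \<le> (K + G eps) / (1 - c * eps)) (at_right 0)"
  proof -
    have "0 < min 1 (1 / (c + 1))" using c by simp
    moreover have "A1 * R1 + A2 * R2 \<le> (K + G eps) / (1 - c * eps)" if "0 < eps" "eps < min 1 (1 / (c + 1))" for eps
    proof (rule bound)
      have "c * eps \<le> c * (1 / (c + 1))" using that c by (intro mult_left_mono) auto
      also have "\<dots> < 1" using c by (simp add: field_simps)
      finally show "c * eps < 1" .
    qed (use that in auto)
    ultimately show ?thesis unfolding eventually_at_right_field by blast
  qed
  ultimately have "A1 * R1 + A2 * R2 \<le> (K + 0) / (1 - c * 0)" by (rule tendsto_lowerbound) simp
  then show ?thesis by simp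
qed

lemma hbc_region_bound:
  assumes q: "1 < q" and d: "0 < d1" "d1 < 1" "0 < d2" "d2 < 1"
    and ach: "achievable secure_hbc q L d1 d2 (R1, R2)"
  shows "rate_weight1 d1 d2 * R1 + rate_weight2 d1 d2 * R2 \<le> real L * log 2 q"
    and "rate_weight1 d2 d1 * R2 + rate_weight2 d2 d1 * R1 \<le> real L * log 2 q"
proof -
  have approx: "\<exists>T1 T2 n. 1 \<le> n \<and> 0 \<le> T1 \<and> 0 \<le> T2 \<and>
      rate_weight1 d1 d2 * T1 + rate_weight2 d1 d2 * T2 \<le> n * (L * log 2 q) + slack_weight d1 d2 * (2 * fano_slack eps + eps + eps * (T1 + T2)) \<and>
      rate_weight1 d2 d1 * T2 + rate_weight2 d2 d1 * T1 \<le> n * (L * log 2 q) + slack_weight d2 d1 * (2 * fano_slack eps + eps + eps * (T1 + T2)) \<and>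
      R1 - eps' < T1 / n \<and> R2 - eps' < T2 / n"
    if e: "0 < eps" "eps < 1" "0 < eps'" for eps eps'
  proof -
    have "\<exists>N1 N2 n f phi1 phi2 PA PB PC. n > 0 \<and> secure_hbc q L d1 d2 n eps N1 N2 f phi1 phi2 PA PB PC \<and>
        R1 - eps' < real N1 * real L * log 2 (real q) / real n \<and>
        R2 - eps' < real N2 * real L * log 2 (real q) / real n"
      using ach e unfolding achievable_def by simp
    then obtain N1 N2 n f phi1 phi2 PA PB PC where n: "n > 0"
      and sec: "secure_hbc q L d1 d2 n eps N1 N2 f phi1 phi2 PA PB PC"
      and r: "R1 - eps' < real N1 * real L * log 2 (real q) / real n"
             "R2 - eps' < real N2 * real L * log 2 (real q) / real n"
      by blast
    show ?thesis
      using hbc_scheme_bound[OF _ d e(1,2) sec] n r q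
      by (intro exI[of _ "real N1 * real L * log 2 q"] exI[of _ "real N2 * real L * log 2 q"] exI[of _ "real n"]) simp
  qed
  have slack: "0 \<le> slack_weight d1 d2" "0 \<le> slack_weight d2 d1"
    using d one_minus_product_pos[of d1 d2] one_minus_product_pos[of d2 d1] unfolding slack_weight_def by simp_all
  have K: "0 \<le> real L * log 2 q" using q by simp
  show "rate_weight1 d1 d2 * R1 + rate_weight2 d1 d2 * R2 \<le> real L * log 2 q"
    by (rule rate_limit[OF rate_weights_ge_1[OF d] slack(1) K]) (use approx in blast)
  show "rate_weight1 d2 d1 * R2 + rate_weight2 d2 d1 * R1 \<le> real L * log 2 q"
  proof (rule rate_limit[OF rate_weights_ge_1[of d2 d1] slack(2) K])
    fix eps eps' :: real assume "0 < eps" "eps < 1" "0 < eps'"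
    from approx[OF this] show "\<exists>T1 T2 n. 1 \<le> n \<and> 0 \<le> T1 \<and> 0 \<le> T2 \<and>
       rate_weight1 d2 d1 * T1 + rate_weight2 d2 d1 * T2 \<le> n * (real L * log 2 q)
         + slack_weight d2 d1 * (2 * fano_slack eps + eps + eps * (T1 + T2)) \<and>
       R2 - eps' < T1 / n \<and> R1 - eps' < T2 / n"
      by (metis add.commute)
  qed (use d in auto)
qed

section \<open>Malicious users\<close>

text \<open>Security against a malicious user implies security against honest-but-curious
  users: the malicious guarantee covers uniform messages and honest
  acknowledgments, under which reported and true states agree.\<close>
lemma secure_mal_imp_hbc:
  assumes q: "q > 0" and sm: "secure_mal q L d1 d2 n eps N1 N2 f phi1 phi2 PA PB PC"
  shows "secure_hbc q L d1 d2 n eps N1 N2 f phi1 phi2 PA PB PC"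
proof -
  define M1 where "M1 = msgs q L N1"
  define M2 where "M2 = msgs q L N2"
  define P where "P = channel_exp d1 d2 n f PA PB PC (pmf_of_set M1) (pmf_of_set M2) honest_ack honest_ack"
  have M1f: "finite M1" "M1 \<noteq> {}" unfolding M1_def using msgs_ne[OF q] by (auto simp: msgs_def)
  have M2f: "finite M2" "M2 \<noteq> {}" unfolding M2_def using msgs_ne[OF q] by (auto simp: msgs_def)
  have sch: "is_scheme q L d1 d2 n eps N1 N2 f phi1 phi2 PA PB PC" using sm unfolding secure_mal_def by blast
  have fb: "\<forall>i w1 w2 t s. f i w1 w2 t s < q ^ L" using sch unfolding is_scheme_def by blast
  have uniform1: "set_pmf (pmf_of_set M1) \<subseteq> msgs q L N1" using M1f unfolding M1_def by simp
  have uniform2: "set_pmf (pmf_of_set M2) \<subseteq> msgs q L N2" using M2f unfolding M2_def by simp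
  have leak_calvin: "MI P W1_of (\<lambda>\<omega>. (Y2_of \<omega>, Sstar_of \<omega>, thC_of \<omega>)) < eps"
    using sm uniform1 unfolding secure_mal_def P_def M2_def Let_def by blast
  have leak_bob: "MI P W2_of (\<lambda>\<omega>. (Y1_of \<omega>, Sstar_of \<omega>, thB_of \<omega>)) < eps"
    using sm uniform2 unfolding secure_mal_def P_def M1_def Let_def by blast
  have states_calvin: "MI P W1_of (\<lambda>\<omega>. (Y2_of \<omega>, Sstar_of \<omega>, thC_of \<omega>)) = MI P W1_of (\<lambda>\<omega>. (Y2_of \<omega>, S_of \<omega>, thC_of \<omega>))"
    by (rule MI_cong) (use honest_reported_states[OF fb] in \<open>simp add: P_def\<close>)
  have states_bob: "MI P W2_of (\<lambda>\<omega>. (Y1_of \<omega>, Sstar_of \<omega>, thB_of \<omega>)) = MI P W2_of (\<lambda>\<omega>. (Y1_of \<omega>, S_of \<omega>, thB_of \<omega>))"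
    by (rule MI_cong) (use honest_reported_states[OF fb] in \<open>simp add: P_def\<close>)
  show ?thesis unfolding secure_hbc_def Let_def
    using sch leak_calvin leak_bob states_calvin states_bob unfolding P_def M1_def M2_def by simp
qed

lemma achievable_mal_imp_hbc: "q > 0 \<Longrightarrow> achievable secure_mal q L d1 d2 R \<Longrightarrow> achievable secure_hbc q L d1 d2 R"
  unfolding achievable_def using secure_mal_imp_hbc by metis

theorem theorem3:
  fixes q L :: nat and d1 d2 :: real
  assumes "primepow q" and "L > 0"
    and "0 < d1" and "d1 < 1" and "0 < d2" and "d2 < 1"
  shows "\<forall>(R1, R2) \<in> cap_region q L d1 d2 \<union> cap_region_hbc q L d1 d2.
     R1 * (1 - d2) / (d2 * (1 - d1) * (1 - d1 * d2)) + R1 / (1 - d1) + R2 / (1 - d1 * d2)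
       \<le> real L * log 2 (real q) \<and>
     R2 * (1 - d1) / (d1 * (1 - d2) * (1 - d1 * d2)) + R1 / (1 - d1 * d2) + R2 / (1 - d2)
       \<le> real L * log 2 (real q)"
proof (intro ballI, clarify)
  fix R1 R2 assume R: "(R1, R2) \<in> cap_region q L d1 d2 \<union> cap_region_hbc q L d1 d2"
  have q: "1 < q" using primepow_gt_Suc_0[OF assms(1)] by simp
  have d: "0 < d1" "d1 < 1" "0 < d2" "d2 < 1" using assms by auto
  have "achievable secure_hbc q L d1 d2 (R1, R2)"
    using R achievable_mal_imp_hbc[of q] q unfolding cap_region_def cap_region_hbc_def by auto
  note bounds = hbc_region_bound[OF q d this]
  show "R1 * (1 - d2) / (d2 * (1 - d1) * (1 - d1 * d2)) + R1 / (1 - d1) + R2 / (1 - d1 * d2)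
       \<le> real L * log 2 (real q) \<and>
     R2 * (1 - d1) / (d1 * (1 - d2) * (1 - d1 * d2)) + R1 / (1 - d1 * d2) + R2 / (1 - d2)
       \<le> real L * log 2 (real q)"
    using bounds rate_weight_form[OF d, of R1 R2] rate_weight_form[OF d(3,4,1,2), of R2 R1]
    by (simp add: mult.commute add_ac)
qed

end
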